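(* Let $r:\mathfrak h^*\to\wedge^2\mathfrak g$ be a splittable triangular dynamical $r$-matrix. Then (1) $\mathfrak g_\lambda=\mathfrak g_\mu$ for all $\lambda,\mu\in\mathfrak h^*$; denote this common Lie subalgebra by $\mathfrak g_1$; (2) $r(\lambda)\in\wedge^2\mathfrak g_1$ for all $\lambda$, and $r$, regarded as a map $\mathfrak h^*\to\wedge^2\mathfrak g_1$, is a non-degenerate triangular dynamical $r$-matrix for the pair $(\mathfrak g_1,\mathfrak h)$, i.e. $\mathfrak h+r(\lambda)^\#(\mathfrak h^\perp)=\mathfrak g_1$ where now $r(\lambda)^\#:\mathfrak g_1^*\to\mathfrak g_1$ and $\mathfrak h^\perp$ is the annihilator of $\mathfrak h$ in $\mathfrak g_1^*$.
   Context: Let $\mathfrak g$ be a finite-dimensional real Lie algebra and $\mathfrak h\subset\mathfrak g$ an abelian Lie subalgebra of dimension $l$ with basis $h_1,\dots,h_l$; $(\lambda^i)$ are the induced coordinates on $\mathfrak h^*$. A triangular dynamical $r$-matrix is a smooth map $r:\mathfrak h^*\to\wedge^2\mathfrak g$ with $[h,r(\lambda)]=0$ for $h\in\mathfrak h$ and $\sum_i h_i\wedge\frac{\partial r}{\partial\lambda^i}+\frac12[r,r]=0$ (Schouten-type bracket on $\wedge^\bullet\mathfrak g$). For $\rho\in\wedge^2\mathfrak g$, $\rho^\#:\mathfrak g^*\to\mathfrak g$ is $\langle\rho^\#\xi,\eta\rangle=\rho(\xi,\eta)$; $\mathfrak h^\perp\subset\mathfrak g^*$ is the annihilator of $\mathfrak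 h$; $\mathfrak g_\lambda=\mathfrak h+r(\lambda)^\#\mathfrak h^\perp$ (a Lie subalgebra). $r$ is splittable if $i^*(\{\xi\in\mathfrak g^*:r(\lambda)^\#\xi\in\mathfrak h\})=\mathfrak h^*$ for every $\lambda$, where $i^*:\mathfrak g^*\to\mathfrak h^*$ is restriction. A triangular dynamical $r$-matrix is non-degenerate if $\mathfrak g_\lambda$ equals the whole Lie algebra. *)

theory Defs
  imports "HOL-Analysis.Analysis"
begin

text \<open>Coordinates: the Lie algebra g is real^'n with bracket br; g* is real^'n,
paired with g by the inner product. A bivector rho in wedge^2 g is an
antisymmetric matrix, rho(xi,eta) = xi . (rho *v eta). The abelian subalgebra h
has basis hb :: 'l => real^'n, and h* has coordinates lambda :: real^'l.\<close>

definition lie_algebra :: "(real^'n \<Rightarrow> real^'n \<Rightarrow> real^'n) \<Rightarrow> bool" where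
  "lie_algebra br \<longleftrightarrow> bilinear br \<and> (\<forall>x. br x x = 0) \<and>
     (\<forall>x y z. br x (br y z) + br y (br z x) + br z (br x y) = 0)"

definition lie_subalgebra :: "(real^'n \<Rightarrow> real^'n \<Rightarrow> real^'n) \<Rightarrow> (real^'n) set \<Rightarrow> bool" where
  "lie_subalgebra br V \<longleftrightarrow> subspace V \<and> (\<forall>x\<in>V. \<forall>y\<in>V. br x y \<in> V)"

definition outer :: "real^'n \<Rightarrow> real^'n \<Rightarrow> real^'n^'n" where
  "outer a b = (\<chi> i j. a $ i * b $ j)"

definition wedge2 :: "(real^'n) set \<Rightarrow> (real^'n^'n) set" where
  "wedge2 V = span {outer a b - outer b a | a b. a \<in> V \<and> b \<in> V}"

definition bv :: "real^'n^'n \<Rightarrow> real^'n \<Rightarrow> real^'n \<Rightarrow> real" where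
  "bv \<rho> \<xi> \<eta> = \<xi> \<bullet> (\<rho> *v \<eta>)"

text \<open>rho^# : g* -> g, <rho^# xi, eta> = rho(xi, eta).\<close>
definition rsharp :: "real^'n^'n \<Rightarrow> real^'n \<Rightarrow> real^'n" where
  "rsharp \<rho> \<xi> = transpose \<rho> *v \<xi>"

text \<open>Adjoint action of x on a 2-tensor: ad_x(a (x) b) = [x,a] (x) b + a (x) [x,b].\<close>
definition ad2 :: "(real^'n \<Rightarrow> real^'n \<Rightarrow> real^'n) \<Rightarrow> real^'n \<Rightarrow> real^'n^'n \<Rightarrow> real^'n^'n" where
  "ad2 br x \<rho> = matrix (br x) ** \<rho> + \<rho> ** transpose (matrix (br x))"

definition hspace :: "('l \<Rightarrow> real^'n) \<Rightarrow> (real^'n) set" where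
  "hspace hb = span (range hb)"

definition hperp :: "('l \<Rightarrow> real^'n) \<Rightarrow> (real^'n) set" where
  "hperp hb = {\<xi>. \<forall>x\<in>hspace hb. \<xi> \<bullet> x = 0}"

text \<open>C-infinity: there is a family of everywhere differentiable maps containing f
and closed under taking partial derivatives.\<close>
definition smooth_map :: "(real^'l \<Rightarrow> 'b::real_normed_vector) \<Rightarrow> bool" where
  "smooth_map f \<longleftrightarrow> (\<exists>S. f \<in> S \<and> (\<forall>g\<in>S. (\<forall>x. g differentiable (at x)) \<and>
      (\<forall>i. (\<lambda>x. frechet_derivative g (at x) (axis i 1)) \<in> S)))"

definition pderiv_r :: "(real^'l \<Rightarrow> real^'n^'n) \<Rightarrow> 'l \<Rightarrow> real^'l \<Rightarrow> real^'n^'n" where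
  "pderiv_r r i lam = frechet_derivative r (at lam) (axis i 1)"

text \<open>The equation  sum_i h_i /\ dr/dlambda^i + 1/2 [r,r] = 0, evaluated on three
covectors xi, eta, zeta (with the Schouten bracket written out:
1/2 [r,r](xi,eta,zeta) = cyclic sum of <xi, [r^# eta, r^# zeta]>).\<close>
definition cdybe :: "(real^'n \<Rightarrow> real^'n \<Rightarrow> real^'n) \<Rightarrow> ('l::finite \<Rightarrow> real^'n)
    \<Rightarrow> (real^'l \<Rightarrow> real^'n^'n) \<Rightarrow> bool" where
  "cdybe br hb r \<longleftrightarrow> (\<forall>lam \<xi> \<eta> \<zeta>.
     (\<Sum>i\<in>UNIV. (\<xi> \<bullet> hb i) * bv (pderiv_r r i lam) \<eta> \<zeta>
               + (\<eta> \<bullet> hb i) * bv (pderiv_r r i lam) \<zeta> \<xi>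
               + (\<zeta> \<bullet> hb i) * bv (pderiv_r r i lam) \<xi> \<eta>)
     + (\<xi> \<bullet> br (rsharp (r lam) \<eta>) (rsharp (r lam) \<zeta>)
        + \<eta> \<bullet> br (rsharp (r lam) \<zeta>) (rsharp (r lam) \<xi>)
        + \<zeta> \<bullet> br (rsharp (r lam) \<xi>) (rsharp (r lam) \<eta>)) = 0)"

text \<open>Triangular dynamical r-matrix for the pair (V, h), V a Lie subalgebra of g
containing h; covectors of V are restrictions of covectors of g.\<close>
definition tdrm :: "(real^'n \<Rightarrow> real^'n \<Rightarrow> real^'n) \<Rightarrow> (real^'n) set \<Rightarrow> ('l::finite \<Rightarrow> real^'n)
    \<Rightarrow> (real^'l \<Rightarrow> real^'n^'n) \<Rightarrow> bool" where
  "tdrm br V hb r \<longleftrightarrow> lie_subalgebra br V \<and> range hb \<subseteq> V \<and> smooth_map r \<and>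
     (\<forall>lam. r lam \<in> wedge2 V) \<and> (\<forall>lam i. ad2 br (hb i) (r lam) = 0) \<and> cdybe br hb r"

definition g_lam :: "('l \<Rightarrow> real^'n) \<Rightarrow> (real^'l \<Rightarrow> real^'n^'n) \<Rightarrow> real^'l \<Rightarrow> (real^'n) set" where
  "g_lam hb r lam = {x + rsharp (r lam) \<xi> | x \<xi>. x \<in> hspace hb \<and> \<xi> \<in> hperp hb}"

definition restr_h :: "('l \<Rightarrow> real^'n) \<Rightarrow> real^'n \<Rightarrow> real^'l" where
  "restr_h hb \<xi> = (\<chi> i. \<xi> \<bullet> hb i)"

definition splittable :: "('l \<Rightarrow> real^'n) \<Rightarrow> (real^'l \<Rightarrow> real^'n^'n) \<Rightarrow> bool" where
  "splittable hb r \<longleftrightarrow> (\<forall>lam. restr_h hb ` {\<xi>. rsharp (r lam) \<xi> \<in> hspace hb} = UNIV)"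

definition nondegenerate :: "(real^'n) set \<Rightarrow> ('l \<Rightarrow> real^'n) \<Rightarrow> (real^'l \<Rightarrow> real^'n^'n) \<Rightarrow> bool" where
  "nondegenerate V hb r \<longleftrightarrow> (\<forall>lam. g_lam hb r lam = V)"

end

theory Submission
  imports Defs
begin

text \<open>
  Write \<open>g\<^sub>\<lambda> = h + r(\<lambda>)\<^sup># h\<^sup>\<bottom>\<close>. Splittability puts the whole image of \<open>r(\<lambda>)\<^sup>#\<close>
  into \<open>g\<^sub>\<lambda>\<close> and identifies the annihilator of \<open>g\<^sub>\<lambda>\<close> with
  \<open>{\<zeta> \<in> h\<^sup>\<bottom>. r(\<lambda>)\<^sup># \<zeta> = 0}\<close>; together with the dynamical Yang-Baxter equation and the
  \<open>h\<close>-invariance of \<open>r\<close> this makes \<open>g\<^sub>\<lambda>\<close> a Lie subalgebra.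

  Fix \<open>\<lambda>\<^sub>0\<close>, a direction \<open>v\<close>, a covector \<open>\<xi>\<^sub>v\<close> restricting to \<open>v\<close> on \<open>h\<close>, put
  \<open>\<lambda>(t) = \<lambda>\<^sub>0 + t v\<close>, \<open>u(t) = r(\<lambda>(t))\<^sup># \<xi>\<^sub>v\<close>, and let \<open>\<Phi>\<^sub>t\<close> be the flow of the linear
  equation \<open>x' = [x, u(t)]\<close>. Lifting its solutions to pairs \<open>(a, \<xi>) \<in> h \<times> h\<^sup>\<bottom>\<close> with
  \<open>x = a + r(\<lambda>(t))\<^sup># \<xi>\<close> shows that \<open>\<Phi>\<^sub>t\<close> maps \<open>g\<^bsub>\<lambda>\<^sub>0\<^esub>\<close> into \<open>g\<^bsub>\<lambda>(t)\<^esub>\<close>. As \<open>\<Phi>\<^sub>t\<close>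
  is injective, \<open>dim g\<^sub>\<lambda>\<close> is constant and \<open>\<Phi>\<^sub>t\<close> maps \<open>g\<^bsub>\<lambda>\<^sub>0\<^esub>\<close> onto \<open>g\<^bsub>\<lambda>(t)\<^esub>\<close>.
  Since \<open>u(t)\<close> lies in the subalgebra \<open>g\<^bsub>\<lambda>(t)\<^esub>\<close>, a transported basis of \<open>g\<^bsub>\<lambda>\<^sub>0\<^esub>\<close> moves
  with velocities in its own span, with bounded coefficients, and a Gronwall estimate keeps it
  inside \<open>g\<^bsub>\<lambda>\<^sub>0\<^esub>\<close>. Hence \<open>g\<^sub>\<lambda>\<close> is constant, and \<open>r(\<lambda>)\<close>, an antisymmetric matrix with range
  in \<open>g\<^sub>\<lambda>\<close>, lies in \<open>\<wedge>\<^sup>2 g\<^sub>\<lambda>\<close>.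
\<close>

section \<open>Gronwall-type estimates\<close>

lemma gronwall_forward:
  fixes \<phi> \<phi>' :: "real \<Rightarrow> real"
  assumes cont: "continuous_on {a..b} \<phi>"
    and deriv: "\<And>s. a < s \<Longrightarrow> s < b \<Longrightarrow> (\<phi> has_real_derivative \<phi>' s) (at s)"
    and growth: "\<And>s. a < s \<Longrightarrow> s < b \<Longrightarrow> \<phi>' s \<le> K * \<phi> s"
    and t: "t \<in> {a..b}"
  shows "\<phi> t \<le> exp (K * (t - a)) * \<phi> a"
proof -
  define \<psi> where "\<psi> s = exp (- K * s) * \<phi> s" for s
  have "\<psi> t \<le> \<psi> a"
  proof (rule DERIV_nonpos_imp_decreasing_open[of a t \<psi>])
    show "a \<le> t" using t by auto
    show "continuous_on {a..t} \<psi>"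
      unfolding \<psi>_def using t by (intro continuous_intros continuous_on_subset[OF cont]) auto
    fix s assume s: "a < s" "s < t"
    have "(\<psi> has_real_derivative exp (- K * s) * (\<phi>' s - K * \<phi> s)) (at s)"
      unfolding \<psi>_def using s t
      by (auto intro!: derivative_eq_intros deriv simp: algebra_simps)
    moreover have "exp (- K * s) * (\<phi>' s - K * \<phi> s) \<le> 0"
      using growth[of s] s t by (intro mult_nonneg_nonpos) auto
    ultimately show "\<exists>y. (\<psi> has_real_derivative y) (at s) \<and> y \<le> 0" by blast
  qed
  then show ?thesis
    by (simp add: \<psi>_def exp_minus field_simps exp_diff right_diff_distrib)
qed

lemma gronwall_backward:
  fixes \<phi> \<phi>' :: "real \<Rightarrow> real"
  assumes cont: "continuous_on {a..b} \<phi>"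
    and deriv: "\<And>s. a < s \<Longrightarrow> s < b \<Longrightarrow> (\<phi> has_real_derivative \<phi>' s) (at s)"
    and decay: "\<And>s. a < s \<Longrightarrow> s < b \<Longrightarrow> - K * \<phi> s \<le> \<phi>' s"
    and t: "t \<in> {a..b}"
  shows "\<phi> a \<le> exp (K * (t - a)) * \<phi> t"
proof -
  define \<psi> where "\<psi> s = exp (K * s) * \<phi> s" for s
  have "\<psi> a \<le> \<psi> t"
  proof (rule DERIV_nonneg_imp_increasing_open[of a t \<psi>])
    show "a \<le> t" using t by auto
    show "continuous_on {a..t} \<psi>"
      unfolding \<psi>_def using t by (intro continuous_intros continuous_on_subset[OF cont]) auto
    fix s assume s: "a < s" "s < t"
    have "(\<psi> has_real_derivative exp (K * s) * (\<phi>' s + K * \<phi> s)) (at s)"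
      unfolding \<psi>_def using s t
      by (auto intro!: derivative_eq_intros deriv simp: algebra_simps)
    moreover have "0 \<le> exp (K * s) * (\<phi>' s + K * \<phi> s)"
      using decay[of s] s t by (intro mult_nonneg_nonneg) auto
    ultimately show "\<exists>y. (\<psi> has_real_derivative y) (at s) \<and> 0 \<le> y" by blast
  qed
  then show ?thesis
    by (simp add: \<psi>_def field_simps exp_diff right_diff_distrib)
qed

lemma deriv_zero_imp_constant:
  fixes f :: "real \<Rightarrow> real"
  assumes cont: "continuous_on {0..1} f"
    and deriv: "\<And>s. 0 < s \<Longrightarrow> s < 1 \<Longrightarrow> (f has_real_derivative 0) (at s)"
    and t: "t \<in> {0..1}"
  shows "f t = f 0"
proof (cases "t = 0")
  case False
  with t have "0 < t" by auto
  then show ?thesis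
    by (rule DERIV_isconst_end) (use t in \<open>auto intro: continuous_on_subset[OF cont] deriv\<close>)
qed simp

section \<open>Linear ODEs on the unit interval\<close>

lemma linear_family_uniformly_bounded:
  fixes G :: "real \<Rightarrow> 'a::euclidean_space \<Rightarrow> 'b::real_normed_vector"
  assumes cont: "continuous_on ({a..b} \<times> UNIV) (\<lambda>p. G (fst p) (snd p))"
    and lin: "\<And>t. linear (G t)"
  shows "\<exists>K>0. \<forall>t\<in>{a..b}. \<forall>z. norm (G t z) \<le> K * norm z"
proof -
  have "compact ((\<lambda>p. G (fst p) (snd p)) ` ({a..b} \<times> sphere 0 1))"
    by (intro compact_continuous_image continuous_on_subset[OF cont] compact_Times) auto
  then obtain B where B: "\<And>t z. t \<in> {a..b} \<Longrightarrow> norm z = 1 \<Longrightarrow> norm (G t z) \<le> B"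
    by (fastforce dest!: compact_imp_bounded simp: bounded_iff)
  have "norm (G t z) \<le> max B 1 * norm z" if t: "t \<in> {a..b}" for t z
  proof (cases "z = 0")
    case True
    then show ?thesis using linear_0[OF lin] by simp
  next
    case False
    have "G t z = norm z *\<^sub>R G t (z /\<^sub>R norm z)"
      using False by (simp add: linear_scale[OF lin])
    then have "norm (G t z) \<le> norm z * B"
      using B[OF t, of "z /\<^sub>R norm z"] False by (simp add: mult_left_mono)
    also have "\<dots> \<le> max B 1 * norm z"
      by (metis mult.commute mult_right_mono max.cobounded1 norm_ge_zero)
    finally show ?thesis .
  qed
  then show ?thesis by (intro exI[of _ "max B 1"]) auto
qed

lemma integral_power_0:
  assumes "0 \<le> t"
  shows "integral {0..t} (\<lambda>s::real. s ^ k) = t ^ Suc k / Suc k"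
proof -
  have "((\<lambda>s::real. s ^ k) has_integral (t ^ Suc k / Suc k - 0 ^ Suc k / Suc k)) {0..t}"
  proof (rule fundamental_theorem_of_calculus[OF assms])
    fix s :: real
    have "((\<lambda>s. s ^ Suc k / Suc k) has_real_derivative s ^ k) (at s)"
      using DERIV_cdivide[OF DERIV_pow[of "Suc k" s], of "Suc k"] by (simp del: of_nat_Suc)
    then show "((\<lambda>s. s ^ Suc k / Suc k) has_vector_derivative s ^ k) (at s within {0..t})"
      by (simp add: has_real_derivative_iff_has_vector_derivative[symmetric] has_field_derivative_at_within)
  qed
  then show ?thesis by (simp add: integral_unique)
qed

locale linear_ode =
  fixes F :: "real \<Rightarrow> 'a::euclidean_space \<Rightarrow> 'a"
  assumes continuous_on_F: "continuous_on ({0..1} \<times> UNIV) (\<lambda>p. F (fst p) (snd p))"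
    and linear_F: "\<And>t. linear (F t)"
begin

definition bound :: real where
  "bound = (SOME K. 0 < K \<and> (\<forall>t\<in>{0..1}. \<forall>z. norm (F t z) \<le> K * norm z))"

lemma bound_pos: "0 < bound"
  and norm_F_le: "t \<in> {0..1} \<Longrightarrow> norm (F t z) \<le> bound * norm z"
  using someI_ex[OF linear_family_uniformly_bounded[OF continuous_on_F linear_F]]
  unfolding bound_def by auto

lemma continuous_on_F_comp:
  assumes "continuous_on {0..1} y"
  shows "continuous_on {0..1} (\<lambda>s. F s (y s))"
proof -
  have "continuous_on {0..1} (\<lambda>s. (s, y s))" by (intro continuous_intros assms)
  from continuous_on_compose2[OF continuous_on_F this] show ?thesis by auto
qed

lemma integrable_F_comp:
  assumes "continuous_on {0..1} y" "t \<le> 1"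
  shows "(\<lambda>s. F s (y s)) integrable_on {0..t}"
  using assms
  by (intro integrable_continuous_real continuous_on_subset[OF continuous_on_F_comp]) auto

lemma norm_integral_F_le:
  assumes y: "continuous_on {0..1} y" and t: "t \<in> {0..1}"
    and le: "\<And>s. s \<in> {0..t} \<Longrightarrow> norm (y s) \<le> c * (bound * s) ^ k / fact k"
  shows "norm (integral {0..t} (\<lambda>s. F s (y s))) \<le> c * (bound * t) ^ Suc k / fact (Suc k)"
proof -
  have "norm (integral {0..t} (\<lambda>s. F s (y s)))
      \<le> integral {0..t} (\<lambda>s. (c * bound ^ Suc k / fact k) * s ^ k)"
  proof (rule integral_norm_bound_integral)
    show "(\<lambda>s. F s (y s)) integrable_on {0..t}" using y t by (intro integrable_F_comp) auto
    show "(\<lambda>s. (c * bound ^ Suc k / fact k) * s ^ k) integrable_on {0..t}"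
      by (intro integrable_continuous_real continuous_intros)
    fix s assume s: "s \<in> {0..t}"
    have "norm (F s (y s)) \<le> bound * norm (y s)" using s t by (intro norm_F_le) auto
    also have "\<dots> \<le> bound * (c * (bound * s) ^ k / fact k)"
      using le[OF s] bound_pos by (intro mult_left_mono) auto
    also have "\<dots> = (c * bound ^ Suc k / fact k) * s ^ k" by (simp add: power_mult_distrib)
    finally show "norm (F s (y s)) \<le> (c * bound ^ Suc k / fact k) * s ^ k" .
  qed
  also have "\<dots> = c * (bound * t) ^ Suc k / fact (Suc k)"
    using t by (simp add: integral_power_0 power_mult_distrib fact_Suc field_simps del: of_nat_Suc)
  finally show ?thesis .
qed

primrec picard :: "'a \<Rightarrow> nat \<Rightarrow> real \<Rightarrow> 'a" where
  "picard x0 0 = (\<lambda>t. x0)"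
| "picard x0 (Suc k) = (\<lambda>t. x0 + integral {0..t} (\<lambda>s. F s (picard x0 k s)))"

declare picard.simps(2) [simp del]

lemma picard_Suc_apply: "picard x0 (Suc k) t = x0 + integral {0..t} (\<lambda>s. F s (picard x0 k s))"
  by (simp add: picard.simps)

lemma continuous_on_picard: "continuous_on {0..1} (picard x0 k)"
proof (induction k)
  case (Suc k)
  have "(\<lambda>s. F s (picard x0 k s)) integrable_on {0..1}"
    by (rule integrable_F_comp[OF Suc]) simp
  then show ?case
    by (auto simp: picard.simps intro!: continuous_intros indefinite_integral_continuous_1)
qed simp

lemma norm_picard_step_le:
  assumes "t \<in> {0..1}"
  shows "norm (picard x0 (Suc k) t - picard x0 k t) \<le> norm x0 * (bound * t) ^ Suc k / fact (Suc k)"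
  using assms
proof (induction k arbitrary: t)
  case 0
  have "norm (integral {0..t} (\<lambda>s. F s x0)) \<le> norm x0 * (bound * t) ^ Suc 0 / fact (Suc 0)"
    by (rule norm_integral_F_le[where k = 0, OF _ 0]) simp_all
  then show ?case by (simp add: picard.simps)
next
  case (Suc k)
  have int: "(\<lambda>s. F s (picard x0 j s)) integrable_on {0..t}" for j
    using Suc.prems by (intro integrable_F_comp continuous_on_picard) auto
  have "picard x0 (Suc (Suc k)) t - picard x0 (Suc k) t
      = integral {0..t} (\<lambda>s. F s (picard x0 (Suc k) s - picard x0 k s))"
    unfolding picard_Suc_apply[of x0 "Suc k" t] picard_Suc_apply[of x0 k t]
    by (simp add: linear_diff[OF linear_F] integral_diff[OF int int])
  also have "norm \<dots> \<le> norm x0 * (bound * t) ^ Suc (Suc k) / fact (Suc (Suc k))"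
    using Suc by (intro norm_integral_F_le continuous_intros continuous_on_picard) auto
  finally show ?case .
qed

lemma picard_converges: "\<exists>x. uniform_limit {0..1} (picard x0) x sequentially"
proof -
  let ?M = "\<lambda>k. norm x0 * (inverse (fact (Suc k)) * bound ^ Suc k)"
  have "norm (picard x0 (Suc k) t - picard x0 k t) \<le> ?M k" if "t \<in> {0..1}" for k t
  proof -
    have "(bound * t) ^ Suc k \<le> bound ^ Suc k"
      using that bound_pos by (intro power_mono) (auto simp: mult_left_le)
    then have "norm x0 * (bound * t) ^ Suc k / fact (Suc k) \<le> ?M k"
      by (simp add: divide_simps mult_left_mono del: fact_Suc)
    with norm_picard_step_le[OF that, of x0 k] show ?thesis by linarith
  qed
  moreover have "summable ?M"
    using summable_ignore_initial_segment[OF summable_exp[of bound], of 1]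
    by (intro summable_mult) simp
  ultimately have "uniform_limit {0..1} (\<lambda>n t. \<Sum>k<n. picard x0 (Suc k) t - picard x0 k t)
      (\<lambda>t. \<Sum>k. picard x0 (Suc k) t - picard x0 k t) sequentially"
    by (rule Weierstrass_m_test)
  then have "uniform_limit {0..1} (\<lambda>n t. x0 + (\<Sum>k<n. picard x0 (Suc k) t - picard x0 k t))
      (\<lambda>t. x0 + (\<Sum>k. picard x0 (Suc k) t - picard x0 k t)) sequentially"
    by (intro uniform_limit_intros)
  moreover have "(\<Sum>k<n. picard x0 (Suc k) t - picard x0 k t) = picard x0 n t - x0" for n t
    by (induction n) simp_all
  ultimately show ?thesis by auto
qed

lemma uniform_limit_F_comp:
  assumes lim: "uniform_limit {0..1} y x sequentially"
  shows "uniform_limit {0..1} (\<lambda>n s. F s (y n s)) (\<lambda>s. F s (x s)) sequentially"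
proof (rule uniform_limitI)
  fix e :: real assume "0 < e"
  then have "\<forall>\<^sub>F n in sequentially. \<forall>s\<in>{0..1}. dist (y n s) (x s) < e / bound"
    using uniform_limitD[OF lim] bound_pos by simp
  then show "\<forall>\<^sub>F n in sequentially. \<forall>s\<in>{0..1}. dist (F s (y n s)) (F s (x s)) < e"
  proof eventually_elim
    case (elim n)
    show ?case
    proof
      fix s :: real assume s: "s \<in> {0..1}"
      have "dist (F s (y n s)) (F s (x s)) \<le> bound * dist (y n s) (x s)"
        using norm_F_le[OF s, of "y n s - x s"] by (simp add: dist_norm linear_diff[OF linear_F])
      also have "\<dots> < e" using elim s bound_pos by (simp add: field_simps)
      finally show "dist (F s (y n s)) (F s (x s)) < e" .
    qed
  qed
qed

lemma picard_limit_integral_equation: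
  assumes lim: "uniform_limit {0..1} (picard x0) x sequentially" and t: "t \<in> {0..1}"
  shows "x t = x0 + integral {0..t} (\<lambda>s. F s (x s))"
proof -
  have ul: "uniform_limit {0..t} (\<lambda>n s. F s (picard x0 n s)) (\<lambda>s. F s (x s)) sequentially"
    using t by (intro uniform_limit_on_subset[OF uniform_limit_F_comp[OF lim]]) auto
  have cont: "continuous_on {0..t} (\<lambda>s. F s (picard x0 n s))" for n
    using t by (intro continuous_on_subset[OF continuous_on_F_comp[OF continuous_on_picard]]) auto
  obtain I J where I: "\<And>n. ((\<lambda>s. F s (picard x0 n s)) has_integral I n) {0..t}"
    and J: "((\<lambda>s. F s (x s)) has_integral J) {0..t}" and IJ: "I \<longlonglongrightarrow> J"
    by (rule uniform_limit_integral[OF ul cont trivial_limit_sequentially]) blast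
  have "(\<lambda>n. picard x0 (Suc n) t) = (\<lambda>n. x0 + I n)"
    using integral_unique[OF I] by (simp add: picard_Suc_apply)
  then have "(\<lambda>n. picard x0 (Suc n) t) \<longlonglongrightarrow> x0 + J"
    using tendsto_add[OF tendsto_const IJ] by simp
  moreover have "(\<lambda>n. picard x0 (Suc n) t) \<longlonglongrightarrow> x t"
    using LIMSEQ_Suc[OF tendsto_uniform_limitI[OF lim t]] .
  ultimately show ?thesis using J by (simp add: LIMSEQ_unique integral_unique)
qed

definition solution :: "'a \<Rightarrow> (real \<Rightarrow> 'a) \<Rightarrow> bool" where
  "solution x0 x \<longleftrightarrow> x 0 = x0 \<and> continuous_on {0..1} x \<and>
     (\<forall>t\<in>{0<..<1}. (x has_vector_derivative F t (x t)) (at t))"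

lemma solution_exists: "\<exists>x. solution x0 x"
proof -
  obtain x where lim: "uniform_limit {0..1} (picard x0) x sequentially"
    using picard_converges by blast
  have "continuous_on {0..1} x"
    by (rule uniform_limit_theorem[OF always_eventually lim]) (simp_all add: continuous_on_picard)
  then have cont: "continuous_on {0..1} (\<lambda>s. F s (x s))" by (rule continuous_on_F_comp)
  define y where "y t = x0 + integral {0..t} (\<lambda>s. F s (x s))" for t
  have xy: "x t = y t" if "t \<in> {0..1}" for t
    using picard_limit_integral_equation[OF lim that] by (simp add: y_def)
  have "(y has_vector_derivative F t (y t)) (at t)" if t: "t \<in> {0<..<1}" for t
  proof -
    have "((\<lambda>u. integral {0..u} (\<lambda>s. F s (x s))) has_vector_derivative F t (x t)) (at t within {0..1})"
      by (rule integral_has_vector_derivative[OF cont]) (use t in auto)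
    then have "(y has_vector_derivative F t (x t)) (at t within {0..1})"
      unfolding y_def using has_vector_derivative_add[OF has_vector_derivative_const] by fastforce
    moreover have "at t within {0..1} = at t" using t by (intro at_within_interior) auto
    ultimately show ?thesis using t xy[of t] by simp
  qed
  moreover have "continuous_on {0..1} y"
    unfolding y_def
    by (intro continuous_on_add continuous_on_const indefinite_integral_continuous_1
        integrable_continuous_real cont)
  moreover have "y 0 = x0" by (simp add: y_def)
  ultimately show ?thesis unfolding solution_def by blast
qed

lemma has_real_derivative_inner_solution:
  assumes "solution x0 x" "0 < s" "s < 1"
  shows "((\<lambda>s. x s \<bullet> x s) has_real_derivative 2 * (x s \<bullet> F s (x s))) (at s)"
proof -
  have "(x has_vector_derivative F s (x s)) (at s)" using assms by (simp add: solution_def)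
  from bounded_bilinear.has_vector_derivative[OF bounded_bilinear_inner this this] show ?thesis
    by (simp add: has_real_derivative_iff_has_vector_derivative inner_commute)
qed

lemma abs_inner_F_le:
  assumes "t \<in> {0..1}"
  shows "\<bar>2 * (z \<bullet> F t z)\<bar> \<le> 2 * bound * (z \<bullet> z)"
proof -
  have "\<bar>z \<bullet> F t z\<bar> \<le> norm z * norm (F t z)" by (rule Cauchy_Schwarz_ineq2)
  also have "\<dots> \<le> norm z * (bound * norm z)" using assms by (intro mult_left_mono norm_F_le) auto
  finally show ?thesis by (simp add: dot_square_norm power2_eq_square abs_mult mult_ac)
qed

lemma norm_solution_bounds:
  assumes sol: "solution x0 x" and t: "t \<in> {0..1}"
  shows "norm (x t) \<le> exp bound * norm x0" and "norm x0 \<le> exp bound * norm (x t)"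
proof -
  define \<phi> where "\<phi> s = x s \<bullet> x s" for s
  define \<phi>' where "\<phi>' s = 2 * (x s \<bullet> F s (x s))" for s
  have cont: "continuous_on {0..1} \<phi>"
    using sol unfolding \<phi>_def solution_def by (auto intro!: continuous_intros)
  have deriv: "(\<phi> has_real_derivative \<phi>' s) (at s)" if "0 < s" "s < 1" for s
    unfolding \<phi>_def[abs_def] \<phi>'_def using has_real_derivative_inner_solution[OF sol that] .
  have up: "\<phi>' s \<le> 2 * bound * \<phi> s" and down: "- (2 * bound) * \<phi> s \<le> \<phi>' s"
    if "0 < s" "s < 1" for s
    using abs_inner_F_le[of s "x s"] that by (auto simp: \<phi>_def \<phi>'_def abs_le_iff)
  have nonneg: "0 \<le> \<phi> s" for s by (simp add: \<phi>_def)
  have exp_le: "exp (2 * bound * (t - 0)) \<le> exp bound ^ 2"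
    using t bound_pos by (simp add: exp_double[symmetric])
  have "\<phi> t \<le> exp (2 * bound * (t - 0)) * \<phi> 0"
    by (rule gronwall_forward[OF cont deriv up t])
  also have "\<dots> \<le> exp bound ^ 2 * \<phi> 0" by (rule mult_right_mono[OF exp_le nonneg])
  finally have "norm (x t) ^ 2 \<le> (exp bound * norm x0) ^ 2"
    using sol by (simp add: \<phi>_def solution_def power2_norm_eq_inner power_mult_distrib)
  then show "norm (x t) \<le> exp bound * norm x0" by (rule power2_le_imp_le) simp
  have "\<phi> 0 \<le> exp (2 * bound * (t - 0)) * \<phi> t"
    by (rule gronwall_backward[OF cont deriv down t])
  also have "\<dots> \<le> exp bound ^ 2 * \<phi> t" by (rule mult_right_mono[OF exp_le nonneg])
  finally have "norm x0 ^ 2 \<le> (exp bound * norm (x t)) ^ 2"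
    using sol by (simp add: \<phi>_def solution_def power2_norm_eq_inner power_mult_distrib)
  then show "norm x0 \<le> exp bound * norm (x t)" by (rule power2_le_imp_le) simp
qed

lemma solution_lincomb:
  assumes "solution x0 x" "solution y0 y"
  shows "solution (a *\<^sub>R x0 + b *\<^sub>R y0) (\<lambda>t. a *\<^sub>R x t + b *\<^sub>R y t)"
  unfolding solution_def
proof (intro conjI ballI)
  show "a *\<^sub>R x 0 + b *\<^sub>R y 0 = a *\<^sub>R x0 + b *\<^sub>R y0"
    using assms by (simp add: solution_def)
  show "continuous_on {0..1} (\<lambda>t. a *\<^sub>R x t + b *\<^sub>R y t)"
    using assms unfolding solution_def by (intro continuous_intros) auto
  fix t :: real assume "t \<in> {0<..<1}"
  then have "(x has_vector_derivative F t (x t)) (at t)" "(y has_vector_derivative F t (y t)) (at t)"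
    using assms by (auto simp: solution_def)
  then have "((\<lambda>t. a *\<^sub>R x t + b *\<^sub>R y t) has_vector_derivative
      a *\<^sub>R F t (x t) + b *\<^sub>R F t (y t)) (at t)"
    by (intro has_vector_derivative_add
        bounded_linear.has_vector_derivative[OF bounded_linear_scaleR_right])
  then show "((\<lambda>t. a *\<^sub>R x t + b *\<^sub>R y t) has_vector_derivative
      F t (a *\<^sub>R x t + b *\<^sub>R y t)) (at t)"
    by (simp add: linear_add[OF linear_F] linear_scale[OF linear_F])
qed

lemma solution_unique:
  assumes "solution x0 x" "solution x0 y" "t \<in> {0..1}"
  shows "x t = y t"
proof -
  have "solution 0 (\<lambda>t. x t - y t)"
    using solution_lincomb[OF assms(1,2), of 1 "-1"] by simp
  from norm_solution_bounds(1)[OF this assms(3)] show ?thesis by simp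
qed

definition flow :: "'a \<Rightarrow> real \<Rightarrow> 'a" where
  "flow x0 = (SOME x. solution x0 x)"

lemma solution_flow: "solution x0 (flow x0)"
  unfolding flow_def using someI_ex[OF solution_exists] .

lemma flow_eq: "solution x0 x \<Longrightarrow> t \<in> {0..1} \<Longrightarrow> flow x0 t = x t"
  using solution_unique[OF solution_flow] .

lemma linear_flow:
  assumes t: "t \<in> {0..1}"
  shows "linear (\<lambda>x0. flow x0 t)"
proof (rule linearI)
  fix x0 y0 :: 'a and c :: real
  show "flow (x0 + y0) t = flow x0 t + flow y0 t"
    using flow_eq[OF solution_lincomb[OF solution_flow solution_flow, of 1 x0 1 y0] t] by simp
  show "flow (c *\<^sub>R x0) t = c *\<^sub>R flow x0 t"
    using flow_eq[OF solution_lincomb[OF solution_flow solution_flow, of c x0 0 x0] t] by simp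
qed

lemma flow_0: "flow x0 0 = x0"
  and continuous_on_flow: "continuous_on {0..1} (flow x0)"
  and has_vector_derivative_flow:
    "0 < t \<Longrightarrow> t < 1 \<Longrightarrow> (flow x0 has_vector_derivative F t (flow x0 t)) (at t)"
  using solution_flow[of x0] by (auto simp: solution_def)

lemma norm_flow_le: "t \<in> {0..1} \<Longrightarrow> norm (flow x0 t) \<le> exp bound * norm x0"
  and norm_le_flow: "t \<in> {0..1} \<Longrightarrow> norm x0 \<le> exp bound * norm (flow x0 t)"
  using norm_solution_bounds[OF solution_flow] by auto

lemma inj_flow:
  assumes "t \<in> {0..1}"
  shows "inj (\<lambda>x0. flow x0 t)"
  unfolding linear_inj_iff_eq_0[OF linear_flow[OF assms]]
  using norm_le_flow[OF assms] by (metis mult_zero_right norm_eq_zero norm_le_zero_iff)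

lemma dim_flow_image:
  assumes "t \<in> {0..1}"
  shows "dim ((\<lambda>x0. flow x0 t) ` S) = dim S"
  by (rule dim_image_eq[OF linear_flow[OF assms]]) (use inj_flow[OF assms] in \<open>auto intro: inj_on_subset\<close>)

end

section \<open>Curves whose velocities stay in their span\<close>

lemma subspace_finite_equations:
  fixes V :: "'a::euclidean_space set"
  assumes "subspace V"
  obtains E where "finite E" "V = {y. \<forall>e\<in>E. e \<bullet> y = 0}"
proof -
  obtain E where E: "E \<subseteq> orthogonal_comp V" "independent E" "orthogonal_comp V \<subseteq> span E"
    by (rule basis_exists[of "orthogonal_comp V"])
  have "y \<in> V \<longleftrightarrow> (\<forall>e\<in>E. e \<bullet> y = 0)" for y
  proof
    assume "y \<in> V"
    then show "\<forall>e\<in>E. e \<bullet> y = 0"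
      using E(1) by (force simp: orthogonal_comp_def orthogonal_def inner_commute)
  next
    assume "\<forall>e\<in>E. e \<bullet> y = 0"
    then have "orthogonal y w" if "w \<in> orthogonal_comp V" for w
      using orthogonal_to_span[of w E y] E(3) that by (auto simp: orthogonal_def inner_commute)
    then have "y \<in> orthogonal_comp (orthogonal_comp V)"
      by (auto simp: orthogonal_comp_def orthogonal_def inner_commute)
    then show "y \<in> V" using orthogonal_comp_self[OF assms] by simp
  qed
  then show ?thesis using that finiteI_independent[OF E(2)] by blast
qed

lemma quadratic_form_le:
  fixes y :: "'b \<Rightarrow> real"
  assumes fin: "finite B" and a: "\<And>c d. c \<in> B \<Longrightarrow> d \<in> B \<Longrightarrow> \<bar>a c d\<bar> \<le> C"
  shows "(\<Sum>c\<in>B. \<Sum>d\<in>B. 2 * a c d * y c * y d) \<le> 2 * C * card B * (\<Sum>c\<in>B. (y c)\<^sup>2)"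
proof -
  have "2 * a c d * y c * y d \<le> C * (y c)\<^sup>2 + C * (y d)\<^sup>2" if "c \<in> B" "d \<in> B" for c d
  proof -
    have "2 * a c d * y c * y d \<le> \<bar>2 * a c d * y c * y d\<bar>" by (rule abs_ge_self)
    also have "\<dots> = \<bar>a c d\<bar> * (2 * \<bar>y c\<bar> * \<bar>y d\<bar>)" by (simp add: abs_mult)
    also have "\<dots> \<le> C * ((y c)\<^sup>2 + (y d)\<^sup>2)"
      using a[OF that] sum_squares_bound[of "\<bar>y c\<bar>" "\<bar>y d\<bar>"]
      by (intro mult_mono) (auto simp: mult_ac)
    finally show ?thesis by (simp add: distrib_left)
  qed
  then have "(\<Sum>c\<in>B. \<Sum>d\<in>B. 2 * a c d * y c * y d) \<le> (\<Sum>c\<in>B. \<Sum>d\<in>B. C * (y c)\<^sup>2 + C * (y d)\<^sup>2)"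
    by (intro sum_mono) auto
  also have "\<dots> = (\<Sum>c\<in>B. \<Sum>d\<in>B. C * (y c)\<^sup>2) + (\<Sum>c\<in>B. \<Sum>d\<in>B. C * (y d)\<^sup>2)"
    by (simp only: sum.distrib)
  also have "\<dots> = 2 * C * card B * (\<Sum>c\<in>B. (y c)\<^sup>2)"
    by (simp add: sum_distrib_left mult_ac)
  finally show ?thesis .
qed

lemma velocity_in_span_growth:
  assumes fin: "finite B"
    and a: "\<And>c. c \<in> B \<Longrightarrow> D c = (\<Sum>d\<in>B. a c d *\<^sub>R X d) \<and> (\<forall>d\<in>B. \<bar>a c d\<bar> \<le> C)"
  shows "(\<Sum>c\<in>B. 2 * (e \<bullet> X c) * (e \<bullet> D c)) \<le> 2 * C * card B * (\<Sum>c\<in>B. (e \<bullet> X c)\<^sup>2)"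
proof -
  have "(\<Sum>c\<in>B. 2 * (e \<bullet> X c) * (e \<bullet> D c)) = (\<Sum>c\<in>B. \<Sum>d\<in>B. 2 * a c d * (e \<bullet> X c) * (e \<bullet> X d))"
    using a by (simp add: inner_sum_right sum_distrib_left mult_ac)
  also have "\<dots> \<le> 2 * C * card B * (\<Sum>c\<in>B. (e \<bullet> X c)\<^sup>2)"
    using a by (intro quadratic_form_le[OF fin]) auto
  finally show ?thesis .
qed

lemma curves_stay_in_subspace:
  fixes X D :: "'b \<Rightarrow> real \<Rightarrow> 'a::euclidean_space"
  assumes fin: "finite B" and V: "subspace V"
    and start: "\<And>b. b \<in> B \<Longrightarrow> X b 0 \<in> V"
    and cont: "\<And>b. b \<in> B \<Longrightarrow> continuous_on {0..1} (X b)"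
    and deriv: "\<And>b t. b \<in> B \<Longrightarrow> 0 < t \<Longrightarrow> t < 1 \<Longrightarrow> (X b has_vector_derivative D b t) (at t)"
    and span: "\<And>b t. b \<in> B \<Longrightarrow> 0 < t \<Longrightarrow> t < 1 \<Longrightarrow>
        \<exists>a. D b t = (\<Sum>c\<in>B. a c *\<^sub>R X c t) \<and> (\<forall>c\<in>B. \<bar>a c\<bar> \<le> C)"
    and b: "b \<in> B" and t: "t \<in> {0..1}"
  shows "X b t \<in> V"
proof -
  obtain E where E: "finite E" and V_eq: "V = {y. \<forall>e\<in>E. e \<bullet> y = 0}"
    using subspace_finite_equations[OF V] by blast
  define \<psi> where "\<psi> s = (\<Sum>e\<in>E. \<Sum>c\<in>B. (e \<bullet> X c s)\<^sup>2)" for s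
  define \<psi>' where "\<psi>' s = (\<Sum>e\<in>E. \<Sum>c\<in>B. 2 * (e \<bullet> X c s) * (e \<bullet> D c s))" for s
  have \<psi>_deriv: "(\<psi> has_real_derivative \<psi>' s) (at s)" if s: "0 < s" "s < 1" for s
    unfolding \<psi>_def[abs_def] \<psi>'_def
  proof (intro DERIV_sum)
    fix e c assume "c \<in> B"
    have "((\<lambda>s. e \<bullet> X c s) has_real_derivative e \<bullet> D c s) (at s)"
      using bounded_linear.has_vector_derivative[OF bounded_linear_inner_right deriv[OF \<open>c \<in> B\<close> s]]
      by (simp add: has_real_derivative_iff_has_vector_derivative)
    then show "((\<lambda>s. (e \<bullet> X c s)\<^sup>2) has_real_derivative 2 * (e \<bullet> X c s) * (e \<bullet> D c s)) (at s)"
      by (auto intro!: derivative_eq_intros)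
  qed
  have \<psi>_growth: "\<psi>' s \<le> 2 * C * card B * \<psi> s" if s: "0 < s" "s < 1" for s
  proof -
    obtain a where a: "\<And>c. c \<in> B \<Longrightarrow> D c s = (\<Sum>d\<in>B. a c d *\<^sub>R X d s) \<and> (\<forall>d\<in>B. \<bar>a c d\<bar> \<le> C)"
      using span[OF _ s] by metis
    have "\<psi>' s \<le> (\<Sum>e\<in>E. 2 * C * card B * (\<Sum>c\<in>B. (e \<bullet> X c s)\<^sup>2))"
      unfolding \<psi>'_def by (intro sum_mono velocity_in_span_growth[OF fin, of "\<lambda>c. D c s" a]) (use a in blast)
    also have "\<dots> = 2 * C * card B * \<psi> s" by (simp add: \<psi>_def sum_distrib_left)
    finally show ?thesis .
  qed
  have "\<psi> t \<le> exp (2 * C * card B * (t - 0)) * \<psi> 0"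
    by (rule gronwall_forward[OF _ \<psi>_deriv \<psi>_growth t])
      (auto simp: \<psi>_def intro!: continuous_intros cont)
  moreover have "\<psi> 0 = 0"
    using start by (simp add: \<psi>_def V_eq)
  moreover have "0 \<le> \<psi> t" by (simp add: \<psi>_def sum_nonneg)
  ultimately have "(\<Sum>e\<in>E. \<Sum>c\<in>B. (e \<bullet> X c t)\<^sup>2) = 0" by (simp add: \<psi>_def)
  then have "\<forall>e\<in>E. (\<Sum>c\<in>B. (e \<bullet> X c t)\<^sup>2) = 0"
    by (simp add: sum_nonneg_eq_0_iff[OF E] sum_nonneg)
  then have "\<forall>e\<in>E. e \<bullet> X b t = 0"
    using b by (simp add: sum_nonneg_eq_0_iff[OF fin])
  then show ?thesis by (simp add: V_eq)
qed

section \<open>Matrices, bivectors and the Lie bracket\<close>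

lemma scaleR_mult_vec: "(c *\<^sub>R A) *v z = c *\<^sub>R (A *v (z :: real^'n))" for A :: "real^'n^'m"
  by (simp add: vec_eq_iff matrix_vector_mult_def sum_distrib_left mult_ac)

lemma uminus_mult_vec: "(- A) *v z = - (A *v (z :: real^'n))" for A :: "real^'n^'m"
  by (simp add: vec_eq_iff matrix_vector_mult_def sum_negf)

lemma sum_mult_vec: "(\<Sum>i\<in>I. f i) *v z = (\<Sum>i\<in>I. f i *v (z :: real^'n))"
  for f :: "'i \<Rightarrow> real^'n^'m"
  by (induction I rule: infinite_finite_induct) (simp_all add: matrix_vector_mult_add_rdistrib)

lemma inner_mult_vec_transpose: "x \<bullet> (A *v y) = (transpose A *v x) \<bullet> y"
  for A :: "real^'n^'m"
  by (simp add: dot_lmul_matrix)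

lemma bounded_bilinear_mult_vec: "bounded_bilinear (\<lambda>(A :: real^'n^'m) (x :: real^'n). A *v x)"
proof -
  have "linear (\<lambda>A :: real^'n^'m. A *v x)" for x :: "real^'n"
    by (rule linearI) (simp_all add: matrix_vector_mult_add_rdistrib scaleR_mult_vec)
  then have "bilinear (\<lambda>(A :: real^'n^'m) (x :: real^'n). A *v x)"
    by (simp add: bilinear_def)
  then show ?thesis by (rule bilinear_conv_bounded_bilinear[THEN iffD1])
qed

lemma continuous_on_mult_vec [continuous_intros]:
  fixes A :: "'a::topological_space \<Rightarrow> real^'n^'m"
  shows "continuous_on S A \<Longrightarrow> continuous_on S x \<Longrightarrow> continuous_on S (\<lambda>t. A t *v x t)"
  by (rule bounded_bilinear.continuous_on[OF bounded_bilinear_mult_vec])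

lemma transpose_uminus: "transpose (- A) = - transpose (A :: real^'n^'m)"
  by (simp add: transpose_def vec_eq_iff)

lemma transpose_sum: "transpose (\<Sum>i\<in>I. f i) = (\<Sum>i\<in>I. transpose (f i :: real^'n^'m))"
  by (simp add: transpose_def vec_eq_iff sum_component)

lemma outer_mult_vec: "outer a b *v z = (b \<bullet> z) *\<^sub>R a"
  by (simp add: outer_def vec_eq_iff matrix_vector_mult_def inner_vec_def sum_distrib_left mult_ac)

lemma transpose_outer: "transpose (outer a b) = outer b a"
  by (simp add: outer_def transpose_def vec_eq_iff)

lemma inner_rsharp: "\<zeta> \<bullet> rsharp \<rho> \<xi> = \<xi> \<bullet> (\<rho> *v \<zeta>)"
  unfolding rsharp_def transpose_matrix_vector by (metis dot_lmul_matrix inner_commute)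

lemma linear_rsharp: "linear (rsharp \<rho>)"
  unfolding rsharp_def[abs_def] by (rule matrix_vector_mul_linear)

lemma bounded_bilinear_rsharp: "bounded_bilinear rsharp"
proof -
  have "linear (\<lambda>\<rho>. rsharp \<rho> \<xi>)" for \<xi>
    by (rule linearI) (simp_all add: rsharp_def vec_eq_iff matrix_vector_mult_def transpose_def
        sum.distrib algebra_simps sum_distrib_left)
  then have "bilinear rsharp" using linear_rsharp unfolding bilinear_def by blast
  then show ?thesis by (rule bilinear_conv_bounded_bilinear[THEN iffD1])
qed

lemma continuous_on_rsharp [continuous_intros]:
  "continuous_on S \<rho> \<Longrightarrow> continuous_on S \<xi> \<Longrightarrow> continuous_on S (\<lambda>t. rsharp (\<rho> t) (\<xi> t))"
  by (rule bounded_bilinear.continuous_on[OF bounded_bilinear_rsharp])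

lemma wedge2_transpose:
  assumes "\<rho> \<in> wedge2 V"
  shows "transpose \<rho> = - \<rho>"
  using assms unfolding wedge2_def
proof (induction rule: span_induct)
  case base
  have add: "transpose (A + B) = transpose A + transpose B" for A B :: "real^'n^'n"
    by (simp add: transpose_def vec_eq_iff)
  have zero: "transpose (0 :: real^'n^'n) = 0"
    by (simp add: transpose_def vec_eq_iff)
  show ?case
    unfolding subspace_def by (simp add: add zero transpose_scalar)
next
  case (step \<rho>)
  then obtain a b where "\<rho> = outer a b - outer b a" by blast
  then show ?case by (simp add: vec_eq_iff transpose_def outer_def)
qed

lemma antisymmetric_in_wedge2:
  fixes \<rho> :: "real^'n^'n"
  assumes V: "subspace V" and anti: "transpose \<rho> = - \<rho>" and range: "\<And>z. \<rho> *v z \<in> V"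
  shows "\<rho> \<in> wedge2 V"
proof -
  obtain B where B: "B \<subseteq> V" "pairwise orthogonal B" "\<And>b. b \<in> B \<Longrightarrow> norm b = 1"
      "independent B" "span B = V"
    using orthonormal_basis_subspace[OF V] by metis
  have fin: "finite B" using B(4) by (rule finiteI_independent)
  have inner_anti: "x \<bullet> (\<rho> *v y) = - ((\<rho> *v x) \<bullet> y)" for x y
    using inner_mult_vec_transpose[of x \<rho> y] by (simp add: anti uminus_mult_vec)
  have expansion: "\<rho> = - (\<Sum>b\<in>B. outer b (\<rho> *v b))"
    unfolding matrix_eq
  proof
    fix z
    have "\<rho> *v z = (\<Sum>b\<in>B. ((\<rho> *v z) \<bullet> b) *\<^sub>R b)"
      using orthonormal_basis_expand[OF B(2,3) _ fin, of "\<rho> *v z"] range B(5) by simp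
    also have "\<dots> = (\<Sum>b\<in>B. (- ((\<rho> *v b) \<bullet> z)) *\<^sub>R b)"
      using inner_anti by (metis inner_commute)
    also have "\<dots> = (- (\<Sum>b\<in>B. outer b (\<rho> *v b))) *v z"
      by (simp add: uminus_mult_vec sum_mult_vec outer_mult_vec sum_negf)
    finally show "\<rho> *v z = (- (\<Sum>b\<in>B. outer b (\<rho> *v b))) *v z" .
  qed
  have expansion_transposed: "\<rho> = (\<Sum>b\<in>B. outer (\<rho> *v b) b)"
    using arg_cong[OF expansion, of transpose] by (simp add: anti transpose_uminus transpose_sum transpose_outer)
  have "(\<Sum>b\<in>B. outer b (\<rho> *v b)) = - \<rho>"
    using arg_cong[OF expansion, of uminus] by simp
  then have "(\<Sum>b\<in>B. outer (\<rho> *v b) b - outer b (\<rho> *v b)) = \<rho> - (- \<rho>)"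
    by (simp only: sum_subtractf flip: expansion_transposed)
  then have "(\<Sum>b\<in>B. outer (\<rho> *v b) b - outer b (\<rho> *v b)) = 2 *\<^sub>R \<rho>"
    by (simp add: scaleR_2)
  then have "\<rho> = (1/2) *\<^sub>R (\<Sum>b\<in>B. outer (\<rho> *v b) b - outer b (\<rho> *v b))" by simp
  also have "\<dots> \<in> wedge2 V"
    unfolding wedge2_def using B(1) range by (intro span_scale span_sum span_base) blast
  finally show ?thesis .
qed

lemma lie_algebra_bilinear: "lie_algebra br \<Longrightarrow> bilinear br"
  by (simp add: lie_algebra_def)

lemma lie_algebra_antisym:
  assumes "lie_algebra br"
  shows "br x y = - br y x"
proof -
  have bil: "bilinear br" using assms by (rule lie_algebra_bilinear)
  have "br (x + y) (x + y) = 0" "br x x = 0" "br y y = 0"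
    using assms by (auto simp: lie_algebra_def)
  then have "br x y + br y x = 0"
    by (simp add: bilinear_ladd[OF bil] bilinear_radd[OF bil] algebra_simps)
  then show ?thesis by (simp add: eq_neg_iff_add_eq_0)
qed

lemma ad2_eq_0_imp_symmetric:
  assumes lin: "linear (br x)" and ad: "ad2 br x \<rho> = 0" and anti: "transpose \<rho> = - \<rho>"
  shows "a \<bullet> br x (rsharp \<rho> b) = b \<bullet> br x (rsharp \<rho> a)"
proof -
  define M where "M = matrix (br x)"
  have br: "br x y = M *v y" for y
    unfolding M_def by (simp add: matrix_vector_mul(2)[OF lin])
  have "(M ** \<rho> + \<rho> ** transpose M) *v a = 0"
    using ad by (simp only: ad2_def M_def matrix_vector_mult_0)
  then have "M *v (\<rho> *v a) + \<rho> *v (transpose M *v a) = 0"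
    by (simp only: matrix_vector_mult_add_rdistrib matrix_vector_mul_assoc)
  then have ad_a: "\<rho> *v (transpose M *v a) = - (M *v (\<rho> *v a))"
    by (simp add: eq_neg_iff_add_eq_0 add.commute)
  have "a \<bullet> br x (rsharp \<rho> b) = (\<rho> *v (transpose M *v a)) \<bullet> b"
    unfolding br rsharp_def by (simp only: inner_mult_vec_transpose transpose_transpose)
  also have "\<dots> = b \<bullet> br x (rsharp \<rho> a)"
    unfolding ad_a br rsharp_def anti
    by (simp add: uminus_mult_vec linear_neg[OF matrix_vector_mul_linear] inner_commute)
  finally show ?thesis .
qed

definition ad_transpose :: "(real^'n \<Rightarrow> real^'n \<Rightarrow> real^'n) \<Rightarrow> real^'n \<Rightarrow> real^'n \<Rightarrow> real^'n"
  where "ad_transpose br y \<zeta> = (\<chi> k. \<zeta> \<bullet> br y (axis k 1))"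

lemma inner_ad_transpose:
  assumes "linear (br y)"
  shows "ad_transpose br y \<zeta> \<bullet> z = \<zeta> \<bullet> br y z"
proof -
  have "ad_transpose br y \<zeta> \<bullet> z = (\<Sum>k\<in>UNIV. (\<zeta> \<bullet> br y (axis k 1)) * z $ k)"
    unfolding inner_vec_def[of "ad_transpose br y \<zeta>" z] by (simp add: ad_transpose_def)
  also have "\<dots> = \<zeta> \<bullet> (\<Sum>k\<in>UNIV. z $ k *\<^sub>R br y (axis k 1))"
    by (simp add: inner_sum_right mult.commute)
  also have "(\<Sum>k\<in>UNIV. z $ k *\<^sub>R br y (axis k 1)) = br y (\<Sum>k\<in>UNIV. z $ k *\<^sub>R axis k 1)"
    by (simp add: linear_sum[OF assms] linear_scale[OF assms])
  also have "(\<Sum>k\<in>UNIV. z $ k *\<^sub>R axis k 1) = z"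
    using basis_expansion[of z] by (simp add: scalar_mult_eq_scaleR)
  finally show ?thesis .
qed

lemma bounded_bilinear_ad_transpose:
  assumes "bilinear br"
  shows "bounded_bilinear (ad_transpose br)"
proof -
  have "bilinear (ad_transpose br)"
    unfolding bilinear_def
    by (intro conjI allI linearI)
      (simp_all add: ad_transpose_def vec_eq_iff inner_add_left bilinear_ladd[OF assms]
        bilinear_lmul[OF assms] inner_add_right)
  then show ?thesis by (rule bilinear_conv_bounded_bilinear[THEN iffD1])
qed

section \<open>The subspaces \<open>h\<close>, \<open>h\<^sup>\<bottom>\<close> and \<open>g\<^sub>\<lambda>\<close>\<close>

lemma hperp_iff: "\<xi> \<in> hperp hb \<longleftrightarrow> (\<forall>i. \<xi> \<bullet> hb i = 0)"
proof
  assume "\<forall>i. \<xi> \<bullet> hb i = 0"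
  then have "span (range hb) \<subseteq> {x. \<xi> \<bullet> x = 0}"
    by (intro span_minimal subspace_hyperplane) auto
  then show "\<xi> \<in> hperp hb" by (auto simp: hperp_def hspace_def)
qed (auto simp: hperp_def hspace_def span_base)

lemma hb_in_hspace: "hb i \<in> hspace hb"
  by (simp add: hspace_def span_base)

lemma hperp_eq_orthogonal_comp: "hperp hb = orthogonal_comp (hspace hb)"
  by (auto simp: hperp_def orthogonal_comp_def orthogonal_def inner_commute)

lemma subspace_hperp: "subspace (hperp hb)"
  by (simp add: hperp_eq_orthogonal_comp subspace_orthogonal_comp)

lemma mem_hspace_iff: "y \<in> hspace hb \<longleftrightarrow> (\<forall>\<xi>\<in>hperp hb. \<xi> \<bullet> y = 0)"
proof -
  have "hspace hb = orthogonal_comp (hperp hb)"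
    unfolding hperp_eq_orthogonal_comp by (simp add: orthogonal_comp_self hspace_def)
  then show ?thesis by (auto simp: orthogonal_comp_def orthogonal_def)
qed

lemma g_lam_eq_sums:
  "g_lam hb r lam = {x + y | x y. x \<in> hspace hb \<and> y \<in> rsharp (r lam) ` hperp hb}"
  by (auto simp: g_lam_def)

lemma subspace_g_lam: "subspace (g_lam hb r lam)"
  unfolding g_lam_eq_sums hspace_def
  by (intro subspace_sums subspace_span linear_subspace_image linear_rsharp subspace_hperp)

lemma g_lamI: "x \<in> hspace hb \<Longrightarrow> \<xi> \<in> hperp hb \<Longrightarrow> x + rsharp (r lam) \<xi> \<in> g_lam hb r lam"
  unfolding g_lam_def by blast

lemma hspace_subset_g_lam: "hspace hb \<subseteq> g_lam hb r lam"
proof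
  fix x assume "x \<in> hspace hb"
  from g_lamI[OF this subspace_0[OF subspace_hperp]] show "x \<in> g_lam hb r lam"
    by (simp add: linear_0[OF linear_rsharp])
qed

lemma rsharp_hperp_in_g_lam:
  assumes "\<xi> \<in> hperp hb"
  shows "rsharp (r lam) \<xi> \<in> g_lam hb r lam"
  using g_lamI[OF _ assms, of 0] by (simp add: hspace_def span_zero)

lemma smooth_map_differentiable: "smooth_map f \<Longrightarrow> f differentiable (at x)"
  unfolding smooth_map_def by blast

lemma smooth_map_pderiv: "smooth_map r \<Longrightarrow> smooth_map (pderiv_r r i)"
  unfolding smooth_map_def pderiv_r_def[abs_def] by blast

lemma smooth_map_continuous: "smooth_map f \<Longrightarrow> continuous_on S f"
  by (meson smooth_map_differentiable differentiable_imp_continuous_within continuous_at_imp_continuous_on)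

lemma smooth_map_line_derivative:
  assumes "smooth_map r"
  shows "((\<lambda>t. r (l0 + t *\<^sub>R v)) has_vector_derivative
      (\<Sum>i\<in>UNIV. v $ i *\<^sub>R pderiv_r r i (l0 + t *\<^sub>R v))) (at t)"
proof -
  let ?D = "frechet_derivative r (at (l0 + t *\<^sub>R v))"
  have D: "(r has_derivative ?D) (at (l0 + t *\<^sub>R v))"
    using smooth_map_differentiable[OF assms] frechet_derivative_works by blast
  have lin: "linear ?D" using has_derivative_linear[OF D] .
  have "((\<lambda>t. l0 + t *\<^sub>R v) has_derivative (\<lambda>h. h *\<^sub>R v)) (at t)"
    by (auto intro!: derivative_eq_intros)
  from diff_chain_at[OF this D] have "((\<lambda>t. r (l0 + t *\<^sub>R v)) has_vector_derivative ?D v) (at t)"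
    by (simp add: has_vector_derivative_def o_def linear_scale[OF lin])
  moreover have "?D v = (\<Sum>i\<in>UNIV. v $ i *\<^sub>R pderiv_r r i (l0 + t *\<^sub>R v))"
  proof -
    have "?D v = ?D (\<Sum>i\<in>UNIV. v $ i *\<^sub>R axis i 1)"
      using basis_expansion[of v] by (simp add: scalar_mult_eq_scaleR)
    then show ?thesis by (simp add: linear_sum[OF lin] linear_scale[OF lin] pderiv_r_def)
  qed
  ultimately show ?thesis by simp
qed

section \<open>Splittable triangular dynamical r-matrices\<close>

locale splittable_tdrm =
  fixes br :: "real^'n \<Rightarrow> real^'n \<Rightarrow> real^'n"
    and hb :: "'l::finite \<Rightarrow> real^'n"
    and r :: "real^'l \<Rightarrow> real^'n^'n"
  assumes lie_algebra: "lie_algebra br"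
    and abelian: "\<And>i j. br (hb i) (hb j) = 0"
    and tdrm: "tdrm br UNIV hb r"
    and splittable: "splittable hb r"
begin

lemma bilinear: "bilinear br"
  using lie_algebra by (rule lie_algebra_bilinear)

lemma bracket_antisym: "br x y = - br y x"
  using lie_algebra by (rule lie_algebra_antisym)

lemma linear_bracket_right: "linear (br x)"
  using bilinear by (simp add: bilinear_def)

lemma bracket_0_left [simp]: "br 0 y = 0" and bracket_0_right [simp]: "br x 0 = 0"
  using bilinear_lzero[OF bilinear] bilinear_rzero[OF bilinear] by auto

lemma continuous_on_bracket [continuous_intros]:
  "continuous_on S x \<Longrightarrow> continuous_on S y \<Longrightarrow> continuous_on S (\<lambda>t. br (x t) (y t))"
  using bilinear by (intro bounded_bilinear.continuous_on[of br]) (simp_all add: bilinear_conv_bounded_bilinear)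

sublocale ad: bounded_bilinear "ad_transpose br"
  by (rule bounded_bilinear_ad_transpose[OF bilinear])

lemma continuous_on_ad_transpose [continuous_intros]:
  "continuous_on S y \<Longrightarrow> continuous_on S \<zeta> \<Longrightarrow> continuous_on S (\<lambda>t. ad_transpose br (y t) (\<zeta> t))"
  by (rule ad.continuous_on)

lemma smooth: "smooth_map r"
  using tdrm by (simp add: tdrm_def)

lemma continuous_on_r_comp [continuous_intros]:
  "continuous_on S f \<Longrightarrow> continuous_on S (\<lambda>t. r (f t))"
  using continuous_on_compose2[OF smooth_map_continuous[OF smooth, of UNIV]] by blast

lemma continuous_on_pderiv_comp [continuous_intros]:
  "continuous_on S f \<Longrightarrow> continuous_on S (\<lambda>t. pderiv_r r i (f t))"
  using continuous_on_compose2[OF smooth_map_continuous[OF smooth_map_pderiv[OF smooth], of UNIV]]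
  by blast

lemma bracket_hspace:
  assumes "x \<in> hspace hb" "y \<in> hspace hb"
  shows "br x y = 0"
proof -
  have zero: "bilinear (\<lambda>x y :: real^'n. 0 :: real^'n)" by (simp add: bilinear_def linear_zero)
  have "br x y = 0" if "x \<in> range hb" "y \<in> range hb" for x y
    using that abelian by auto
  from bilinear_eq[OF bilinear zero order_refl order_refl assms[unfolded hspace_def] this]
  show ?thesis by simp
qed

lemma r_transpose: "transpose (r lam) = - r lam"
proof -
  have "r lam \<in> wedge2 UNIV" using tdrm by (simp add: tdrm_def)
  then show ?thesis by (rule wedge2_transpose)
qed

lemma r_mult_vec: "r lam *v z = - rsharp (r lam) z"
  by (simp add: rsharp_def r_transpose uminus_mult_vec)

lemma inner_rsharp_antisym: "a \<bullet> rsharp (r lam) b = - (b \<bullet> rsharp (r lam) a)"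
  unfolding inner_rsharp[of a] r_mult_vec by simp

lemma hspace_invariance:
  assumes "x \<in> hspace hb"
  shows "a \<bullet> br x (rsharp (r lam) b) = b \<bullet> br x (rsharp (r lam) a)"
  using assms unfolding hspace_def
proof (induction rule: span_induct)
  case base
  have "linear (\<lambda>x. a \<bullet> br x (rsharp (r lam) b) - b \<bullet> br x (rsharp (r lam) a))"
    by (rule linearI) (simp_all add: bilinear_ladd[OF bilinear] bilinear_lmul[OF bilinear]
        inner_add_right algebra_simps)
  from linear_subspace_kernel[OF this] show ?case by simp
next
  case (step x)
  then obtain i where x: "x = hb i" by blast
  have "ad2 br (hb i) (r lam) = 0" using tdrm by (simp add: tdrm_def)
  from ad2_eq_0_imp_symmetric[OF linear_bracket_right this r_transpose] show ?case
    unfolding x .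
qed

lemma cdybe:
  "(\<Sum>i\<in>UNIV. (\<xi> \<bullet> hb i) * bv (pderiv_r r i lam) \<eta> \<zeta>
               + (\<eta> \<bullet> hb i) * bv (pderiv_r r i lam) \<zeta> \<xi>
               + (\<zeta> \<bullet> hb i) * bv (pderiv_r r i lam) \<xi> \<eta>)
     + (\<xi> \<bullet> br (rsharp (r lam) \<eta>) (rsharp (r lam) \<zeta>)
        + \<eta> \<bullet> br (rsharp (r lam) \<zeta>) (rsharp (r lam) \<xi>)
        + \<zeta> \<bullet> br (rsharp (r lam) \<xi>) (rsharp (r lam) \<eta>)) = 0"
proof -
  have "cdybe br hb r" using tdrm by (simp add: tdrm_def)
  from this[unfolded cdybe_def, rule_format] show ?thesis .
qed

lemma cdybe_hperp:
  assumes "\<xi> \<in> hperp hb" "\<eta> \<in> hperp hb" "\<zeta> \<in> hperp hb"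
  shows "\<xi> \<bullet> br (rsharp (r lam) \<eta>) (rsharp (r lam) \<zeta>)
        + \<eta> \<bullet> br (rsharp (r lam) \<zeta>) (rsharp (r lam) \<xi>)
        + \<zeta> \<bullet> br (rsharp (r lam) \<xi>) (rsharp (r lam) \<eta>) = 0"
  using cdybe[of \<xi> lam \<eta> \<zeta>] assms by (simp add: hperp_iff)

lemma exists_split_covector: "\<exists>\<eta>. rsharp (r lam) \<eta> \<in> hspace hb \<and> restr_h hb \<eta> = v"
proof -
  have "v \<in> restr_h hb ` {\<eta>. rsharp (r lam) \<eta> \<in> hspace hb}"
    using splittable by (simp add: splittable_def)
  then show ?thesis by auto
qed

lemma rsharp_in_g_lam: "rsharp (r lam) \<xi> \<in> g_lam hb r lam"
proof -
  obtain \<eta> where \<eta>: "rsharp (r lam) \<eta> \<in> hspace hb" "restr_h hb \<eta> = restr_h hb \<xi>"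
    using exists_split_covector by blast
  then have "\<xi> - \<eta> \<in> hperp hb"
    by (simp add: hperp_iff restr_h_def vec_eq_iff inner_diff_left)
  moreover have "rsharp (r lam) \<xi> = rsharp (r lam) \<eta> + rsharp (r lam) (\<xi> - \<eta>)"
    by (simp add: linear_diff[OF linear_rsharp])
  ultimately show ?thesis using g_lamI[OF \<eta>(1)] by simp
qed

lemma annihilator_g_lam:
  "(\<forall>y\<in>g_lam hb r lam. \<zeta> \<bullet> y = 0) \<longleftrightarrow> \<zeta> \<in> hperp hb \<and> rsharp (r lam) \<zeta> = 0"
proof
  assume ann: "\<forall>y\<in>g_lam hb r lam. \<zeta> \<bullet> y = 0"
  then have \<zeta>: "\<zeta> \<in> hperp hb"
    using hspace_subset_g_lam[of hb r lam] by (auto simp: hperp_def)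
  let ?y = "rsharp (r lam) \<zeta>"
  have "\<xi> \<bullet> ?y = 0" if "\<xi> \<in> hperp hb" for \<xi>
    using ann rsharp_hperp_in_g_lam[OF that] inner_rsharp_antisym[of \<xi> lam \<zeta>] by simp
  then have y: "?y \<in> hspace hb" by (simp add: mem_hspace_iff)
  obtain \<eta> where \<eta>: "rsharp (r lam) \<eta> \<in> hspace hb" "restr_h hb \<eta> = restr_h hb ?y"
    using exists_split_covector by blast
  have "\<eta> - ?y \<in> hperp hb"
    using \<eta>(2) by (simp add: hperp_iff restr_h_def vec_eq_iff inner_diff_left)
  with y have "(\<eta> - ?y) \<bullet> ?y = 0" by (simp add: hperp_def)
  moreover have "\<eta> \<bullet> ?y = 0"
    using inner_rsharp_antisym[of \<eta> lam \<zeta>] \<zeta> \<eta>(1) by (simp add: hperp_def)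
  ultimately have "?y \<bullet> ?y = 0" by (simp add: inner_diff_left)
  with \<zeta> show "\<zeta> \<in> hperp hb \<and> ?y = 0" by simp
next
  assume \<zeta>: "\<zeta> \<in> hperp hb \<and> rsharp (r lam) \<zeta> = 0"
  show "\<forall>y\<in>g_lam hb r lam. \<zeta> \<bullet> y = 0"
  proof
    fix y assume "y \<in> g_lam hb r lam"
    then obtain x \<xi> where "y = x + rsharp (r lam) \<xi>" "x \<in> hspace hb" by (auto simp: g_lam_def)
    then show "\<zeta> \<bullet> y = 0"
      using \<zeta> inner_rsharp_antisym[of \<zeta> lam \<xi>] by (simp add: inner_add_right hperp_def)
  qed
qed

lemma mem_g_lam_iff:
  "y \<in> g_lam hb r lam \<longleftrightarrow> (\<forall>\<zeta>. \<zeta> \<in> hperp hb \<and> rsharp (r lam) \<zeta> = 0 \<longrightarrow> \<zeta> \<bullet> y = 0)"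
proof -
  have "orthogonal_comp (g_lam hb r lam) = {\<zeta>. \<zeta> \<in> hperp hb \<and> rsharp (r lam) \<zeta> = 0}"
    using annihilator_g_lam by (auto simp: orthogonal_comp_def orthogonal_def inner_commute)
  then have "g_lam hb r lam = orthogonal_comp {\<zeta>. \<zeta> \<in> hperp hb \<and> rsharp (r lam) \<zeta> = 0}"
    using orthogonal_comp_self[OF subspace_g_lam[of hb r lam]] by simp
  then show ?thesis by (auto simp: orthogonal_comp_def orthogonal_def inner_commute)
qed

lemma lie_subalgebra_g_lam: "lie_subalgebra br (g_lam hb r lam)"
  unfolding lie_subalgebra_def
proof (intro conjI subspace_g_lam ballI)
  fix x y assume "x \<in> g_lam hb r lam" "y \<in> g_lam hb r lam"
  then obtain a \<xi> b \<eta> where xy: "x = a + rsharp (r lam) \<xi>" "y = b + rsharp (r lam) \<eta>"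
    and ab: "a \<in> hspace hb" "b \<in> hspace hb" and \<xi>\<eta>: "\<xi> \<in> hperp hb" "\<eta> \<in> hperp hb"
    by (auto simp: g_lam_def)
  show "br x y \<in> g_lam hb r lam"
    unfolding mem_g_lam_iff
  proof (intro allI impI)
    fix \<zeta> assume \<zeta>: "\<zeta> \<in> hperp hb \<and> rsharp (r lam) \<zeta> = 0"
    have "\<zeta> \<bullet> br a (rsharp (r lam) \<eta>) = 0"
      using hspace_invariance[OF ab(1), of \<zeta> lam \<eta>] \<zeta> by simp
    moreover have "\<zeta> \<bullet> br (rsharp (r lam) \<xi>) b = 0"
      using hspace_invariance[OF ab(2), of \<zeta> lam \<xi>] \<zeta> bracket_antisym[of "rsharp (r lam) \<xi>" b] by simp
    moreover have "\<zeta> \<bullet> br (rsharp (r lam) \<xi>) (rsharp (r lam) \<eta>) = 0"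
      using cdybe_hperp[of \<zeta> \<xi> \<eta> lam] \<zeta> \<xi>\<eta> by simp
    ultimately show "\<zeta> \<bullet> br x y = 0"
      unfolding xy using bracket_hspace[OF ab]
      by (simp add: bilinear_ladd[OF bilinear] bilinear_radd[OF bilinear] inner_add_right)
  qed
qed

lemma r_in_wedge2_g_lam: "r lam \<in> wedge2 (g_lam hb r lam)"
proof (rule antisymmetric_in_wedge2[OF subspace_g_lam r_transpose])
  fix z
  show "r lam *v z \<in> g_lam hb r lam"
    using subspace_neg[OF subspace_g_lam rsharp_in_g_lam] by (simp add: r_mult_vec)
qed

end

section \<open>Transport along a straight line in \<open>h\<^sup>*\<close>\<close>

locale tdrm_path = splittable_tdrm br hb r
  for br :: "real^'n \<Rightarrow> real^'n \<Rightarrow> real^'n" and hb :: "'l::finite \<Rightarrow> real^'n"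
    and r :: "real^'l \<Rightarrow> real^'n^'n" +
  fixes l0 v :: "real^'l" and \<xi>v :: "real^'n"
  assumes restr_\<xi>v: "restr_h hb \<xi>v = v"
begin

abbreviation path :: "real \<Rightarrow> real^'l" where "path t \<equiv> l0 + t *\<^sub>R v"

abbreviation generator :: "real \<Rightarrow> real^'n" where "generator t \<equiv> rsharp (r (path t)) \<xi>v"

definition bracket_field :: "real \<Rightarrow> real^'n \<Rightarrow> real^'n" where
  "bracket_field t x = br x (generator t)"

text \<open>Under \<open>(a, \<xi>) \<mapsto> a + r(\<lambda>(t))\<^sup># \<xi>\<close> the solutions of this system become solutions
  of \<open>x' = [x, u(t)]\<close> (lemma \<open>pair_field_identity\<close>, where the dynamical Yang-Baxter equation
  enters), and the system keeps \<open>a\<close> in \<open>h\<close> and \<open>\<xi>\<close> in \<open>h\<^sup>\<bottom>\<close>.\<close>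

definition pair_field :: "real \<Rightarrow> (real^'n) \<times> (real^'n) \<Rightarrow> (real^'n) \<times> (real^'n)" where
  "pair_field t p =
     ((\<Sum>i\<in>UNIV. (\<xi>v \<bullet> (pderiv_r r i (path t) *v snd p)) *\<^sub>R hb i),
      ad_transpose br (generator t) (snd p) - ad_transpose br (fst p + rsharp (r (path t)) (snd p)) \<xi>v)"

sublocale bracket: linear_ode bracket_field
proof (rule linear_ode.intro)
  show "continuous_on ({0..1} \<times> UNIV) (\<lambda>p. bracket_field (fst p) (snd p))"
    unfolding bracket_field_def by (intro continuous_intros)
  show "linear (bracket_field t)" for t
    using bilinear unfolding bracket_field_def[abs_def] bilinear_def by blast
qed

sublocale pair: linear_ode pair_field
proof (rule linear_ode.intro)
  show "continuous_on ({0..1} \<times> UNIV) (\<lambda>p. pair_field (fst p) (snd p))"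
    unfolding pair_field_def by (intro continuous_intros)
  show "linear (pair_field t)" for t
    by (rule linearI)
      (simp_all add: pair_field_def matrix_vector_right_distrib inner_add_right scaleR_add_left
        sum.distrib scaleR_sum_right linear_add[OF linear_rsharp] linear_scale[OF linear_rsharp]
        linear_scale[OF matrix_vector_mul_linear] ad.add_left ad.add_right ad.scaleR_left
        ad.scaleR_right scaleR_diff_right scaleR_add_right)
qed

lemma v_component: "v $ i = \<xi>v \<bullet> hb i"
  using restr_\<xi>v by (auto simp: restr_h_def)

lemma pair_field_identity:
  assumes a: "a \<in> hspace hb" and \<xi>: "\<xi> \<in> hperp hb"
  shows "fst (pair_field t (a, \<xi>)) + rsharp (\<Sum>i\<in>UNIV. v $ i *\<^sub>R pderiv_r r i (path t)) \<xi>
      + rsharp (r (path t)) (snd (pair_field t (a, \<xi>))) = bracket_field t (a + rsharp (r (path t)) \<xi>)"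
proof -
  let ?\<rho> = "r (path t)" and ?u = "generator t"
  let ?D = "\<lambda>i. pderiv_r r i (path t)"
  have "\<zeta> \<bullet> (fst (pair_field t (a, \<xi>)) + rsharp (\<Sum>i\<in>UNIV. v $ i *\<^sub>R ?D i) \<xi>
      + rsharp ?\<rho> (snd (pair_field t (a, \<xi>)))) = \<zeta> \<bullet> bracket_field t (a + rsharp ?\<rho> \<xi>)" for \<zeta>
  proof -
    have e1: "\<zeta> \<bullet> fst (pair_field t (a, \<xi>)) = (\<Sum>i\<in>UNIV. (\<zeta> \<bullet> hb i) * bv (?D i) \<xi>v \<xi>)"
      by (simp add: pair_field_def inner_sum_right bv_def mult.commute)
    have e2: "\<zeta> \<bullet> rsharp (\<Sum>i\<in>UNIV. v $ i *\<^sub>R ?D i) \<xi> = (\<Sum>i\<in>UNIV. (\<xi>v \<bullet> hb i) * bv (?D i) \<xi> \<zeta>)"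
      by (simp add: inner_rsharp sum_mult_vec scaleR_mult_vec inner_sum_right bv_def v_component)
    have e3: "\<zeta> \<bullet> rsharp ?\<rho> (snd (pair_field t (a, \<xi>)))
        = - (\<xi> \<bullet> br ?u (rsharp ?\<rho> \<zeta>)) + \<xi>v \<bullet> br a (rsharp ?\<rho> \<zeta>)
          + \<xi>v \<bullet> br (rsharp ?\<rho> \<xi>) (rsharp ?\<rho> \<zeta>)"
      unfolding inner_rsharp_antisym[of \<zeta>]
      by (simp add: pair_field_def inner_diff_left inner_ad_transpose[OF linear_bracket_right]
          bilinear_ladd[OF bilinear] inner_add_right)
    have "(\<Sum>i\<in>UNIV. (\<xi>v \<bullet> hb i) * bv (?D i) \<xi> \<zeta> + (\<zeta> \<bullet> hb i) * bv (?D i) \<xi>v \<xi>)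
        + (\<xi>v \<bullet> br (rsharp ?\<rho> \<xi>) (rsharp ?\<rho> \<zeta>) + \<xi> \<bullet> br (rsharp ?\<rho> \<zeta>) ?u
           + \<zeta> \<bullet> br ?u (rsharp ?\<rho> \<xi>)) = 0"
      using cdybe[of \<xi>v "path t" \<xi> \<zeta>] \<xi> by (simp add: hperp_iff)
    then have cd: "(\<Sum>i\<in>UNIV. (\<xi>v \<bullet> hb i) * bv (?D i) \<xi> \<zeta>) + (\<Sum>i\<in>UNIV. (\<zeta> \<bullet> hb i) * bv (?D i) \<xi>v \<xi>)
        + (\<xi>v \<bullet> br (rsharp ?\<rho> \<xi>) (rsharp ?\<rho> \<zeta>) + \<xi> \<bullet> br (rsharp ?\<rho> \<zeta>) ?u
           + \<zeta> \<bullet> br ?u (rsharp ?\<rho> \<xi>)) = 0"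
      by (simp only: sum.distrib)
    have inv: "\<xi>v \<bullet> br a (rsharp ?\<rho> \<zeta>) = \<zeta> \<bullet> br a ?u" by (rule hspace_invariance[OF a])
    have an1: "\<xi> \<bullet> br (rsharp ?\<rho> \<zeta>) ?u = - (\<xi> \<bullet> br ?u (rsharp ?\<rho> \<zeta>))"
      using bracket_antisym[of "rsharp ?\<rho> \<zeta>" ?u] by simp
    have an2: "\<zeta> \<bullet> br ?u (rsharp ?\<rho> \<xi>) = - (\<zeta> \<bullet> br (rsharp ?\<rho> \<xi>) ?u)"
      using bracket_antisym[of ?u "rsharp ?\<rho> \<xi>"] by simp
    show ?thesis
      unfolding inner_add_right e1 e2 e3 bracket_field_def bilinear_ladd[OF bilinear]
      using cd inv an1 an2 by linarith
  qed
  then show ?thesis using vector_eq_ldot by blast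
qed

lemma snd_pair_field_orthogonal:
  assumes "a \<in> hspace hb"
  shows "snd (pair_field t (a, \<xi>)) \<bullet> hb j = 0"
proof -
  let ?\<rho> = "r (path t)"
  have "\<xi>v \<bullet> br a (hb j) = 0" using bracket_hspace[OF assms hb_in_hspace] by simp
  moreover have "\<xi>v \<bullet> br (rsharp ?\<rho> \<xi>) (hb j) = \<xi> \<bullet> br (generator t) (hb j)"
    using hspace_invariance[OF hb_in_hspace[of hb j], of \<xi>v "path t" \<xi>]
      bracket_antisym[of "rsharp ?\<rho> \<xi>" "hb j"] bracket_antisym[of "generator t" "hb j"] by simp
  ultimately show ?thesis
    by (simp add: pair_field_def inner_diff_left inner_ad_transpose[OF linear_bracket_right]
        bilinear_ladd[OF bilinear] inner_add_right)
qed

lemma pair_solution_fst_in_hspace: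
  assumes sol: "pair.solution (a0, \<xi>0) p" and a0: "a0 \<in> hspace hb" and t: "t \<in> {0..1}"
  shows "fst (p t) \<in> hspace hb"
  unfolding mem_hspace_iff
proof
  fix \<zeta> assume \<zeta>: "\<zeta> \<in> hperp hb"
  have "\<zeta> \<bullet> fst (p t) = \<zeta> \<bullet> fst (p 0)"
  proof (rule deriv_zero_imp_constant[OF _ _ t, where f = "\<lambda>s. \<zeta> \<bullet> fst (p s)"])
    show "continuous_on {0..1} (\<lambda>s. \<zeta> \<bullet> fst (p s))"
      using sol by (auto simp: pair.solution_def intro!: continuous_intros)
    fix s :: real assume "0 < s" "s < 1"
    then have "(p has_vector_derivative pair_field s (p s)) (at s)"
      using sol by (simp add: pair.solution_def)
    from bounded_linear.has_vector_derivative[OF bounded_linear_inner_right[of \<zeta>]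
        bounded_linear.has_vector_derivative[OF bounded_linear_fst this]]
    show "((\<lambda>s. \<zeta> \<bullet> fst (p s)) has_real_derivative 0) (at s)"
      using \<zeta> by (simp add: has_real_derivative_iff_has_vector_derivative pair_field_def
          inner_sum_right hperp_iff)
  qed
  then show "\<zeta> \<bullet> fst (p t) = 0"
    using \<zeta> a0 sol by (simp add: hperp_def pair.solution_def)
qed

lemma pair_solution_snd_in_hperp:
  assumes sol: "pair.solution (a0, \<xi>0) p" and a0: "a0 \<in> hspace hb" and \<xi>0: "\<xi>0 \<in> hperp hb"
    and t: "t \<in> {0..1}"
  shows "snd (p t) \<in> hperp hb"
  unfolding hperp_iff
proof
  fix j
  have "snd (p t) \<bullet> hb j = snd (p 0) \<bullet> hb j"
  proof (rule deriv_zero_imp_constant[OF _ _ t, where f = "\<lambda>s. snd (p s) \<bullet> hb j"])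
    show "continuous_on {0..1} (\<lambda>s. snd (p s) \<bullet> hb j)"
      using sol by (auto simp: pair.solution_def intro!: continuous_intros)
    fix s :: real assume s: "0 < s" "s < 1"
    then have "(p has_vector_derivative pair_field s (p s)) (at s)"
      using sol by (simp add: pair.solution_def)
    then have "((\<lambda>s. snd (p s) \<bullet> hb j) has_vector_derivative snd (pair_field s (p s)) \<bullet> hb j) (at s)"
      by (rule bounded_linear.has_vector_derivative[OF bounded_linear_inner_left
          bounded_linear.has_vector_derivative[OF bounded_linear_snd]])
    moreover have "snd (pair_field s (fst (p s), snd (p s))) \<bullet> hb j = 0"
      by (rule snd_pair_field_orthogonal[OF pair_solution_fst_in_hspace[OF sol a0]]) (use s in auto)
    ultimately show "((\<lambda>s. snd (p s) \<bullet> hb j) has_real_derivative 0) (at s)"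
      by (simp add: has_real_derivative_iff_has_vector_derivative)
  qed
  then show "snd (p t) \<bullet> hb j = 0"
    using \<xi>0 sol by (simp add: hperp_iff pair.solution_def)
qed

lemma transported_solution:
  assumes sol: "pair.solution (a0, \<xi>0) p" and a0: "a0 \<in> hspace hb" and \<xi>0: "\<xi>0 \<in> hperp hb"
  shows "bracket.solution (a0 + rsharp (r l0) \<xi>0) (\<lambda>t. fst (p t) + rsharp (r (path t)) (snd (p t)))"
  unfolding bracket.solution_def
proof (intro conjI ballI)
  have p0: "p 0 = (a0, \<xi>0)" and cont: "continuous_on {0..1} p"
    and deriv: "\<And>s. 0 < s \<Longrightarrow> s < 1 \<Longrightarrow> (p has_vector_derivative pair_field s (p s)) (at s)"
    using sol by (auto simp: pair.solution_def)
  show "fst (p 0) + rsharp (r (path 0)) (snd (p 0)) = a0 + rsharp (r l0) \<xi>0" by (simp add: p0)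
  show "continuous_on {0..1} (\<lambda>t. fst (p t) + rsharp (r (path t)) (snd (p t)))"
    using cont by (intro continuous_intros)
  fix s :: real assume "s \<in> {0<..<1}"
  then have s: "0 < s" "s < 1" "s \<in> {0..1}" by auto
  have "((\<lambda>t. fst (p t) + rsharp (r (path t)) (snd (p t))) has_vector_derivative
      fst (pair_field s (p s)) + (rsharp (r (path s)) (snd (pair_field s (p s)))
        + rsharp (\<Sum>i\<in>UNIV. v $ i *\<^sub>R pderiv_r r i (path s)) (snd (p s)))) (at s)"
    by (intro has_vector_derivative_add bounded_bilinear.has_vector_derivative[OF bounded_bilinear_rsharp]
        smooth_map_line_derivative[OF smooth]
        bounded_linear.has_vector_derivative[OF bounded_linear_fst deriv[OF s(1,2)]]
        bounded_linear.has_vector_derivative[OF bounded_linear_snd deriv[OF s(1,2)]])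
  moreover have "fst (pair_field s (p s)) + (rsharp (r (path s)) (snd (pair_field s (p s)))
        + rsharp (\<Sum>i\<in>UNIV. v $ i *\<^sub>R pderiv_r r i (path s)) (snd (p s)))
      = bracket_field s (fst (p s) + rsharp (r (path s)) (snd (p s)))"
    using pair_field_identity[OF pair_solution_fst_in_hspace[OF sol a0 s(3)]
        pair_solution_snd_in_hperp[OF sol a0 \<xi>0 s(3)], of s]
    by (simp add: algebra_simps)
  ultimately show "((\<lambda>t. fst (p t) + rsharp (r (path t)) (snd (p t))) has_vector_derivative
      bracket_field s (fst (p s) + rsharp (r (path s)) (snd (p s)))) (at s)"
    by simp
qed

lemma flow_in_g_lam:
  assumes x0: "x0 \<in> g_lam hb r l0" and t: "t \<in> {0..1}"
  shows "bracket.flow x0 t \<in> g_lam hb r (path t)"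
proof -
  obtain a0 \<xi>0 where x0_eq: "x0 = a0 + rsharp (r l0) \<xi>0" and a0: "a0 \<in> hspace hb"
    and \<xi>0: "\<xi>0 \<in> hperp hb"
    using x0 by (auto simp: g_lam_def)
  define p where "p = pair.flow (a0, \<xi>0)"
  have sol: "pair.solution (a0, \<xi>0) p" unfolding p_def by (rule pair.solution_flow)
  have "bracket.flow x0 t = fst (p t) + rsharp (r (path t)) (snd (p t))"
    unfolding x0_eq by (rule bracket.flow_eq[OF transported_solution[OF sol a0 \<xi>0] t])
  then show ?thesis
    using g_lamI[OF pair_solution_fst_in_hspace[OF sol a0 t] pair_solution_snd_in_hperp[OF sol a0 \<xi>0 t]]
    by simp
qed

lemma dim_g_lam_le:
  assumes t: "t \<in> {0..1}"
  shows "dim (g_lam hb r l0) \<le> dim (g_lam hb r (path t))"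
proof -
  let ?\<Phi> = "\<lambda>x0. bracket.flow x0 t"
  have "dim (?\<Phi> ` g_lam hb r l0) = dim (g_lam hb r l0)" by (rule bracket.dim_flow_image[OF t])
  moreover have "?\<Phi> ` g_lam hb r l0 \<subseteq> g_lam hb r (path t)"
    using flow_in_g_lam[OF _ t] by auto
  ultimately show ?thesis by (metis dim_subset)
qed

lemma flow_image_g_lam:
  assumes t: "t \<in> {0..1}" and le: "dim (g_lam hb r (path t)) \<le> dim (g_lam hb r l0)"
  shows "(\<lambda>x0. bracket.flow x0 t) ` g_lam hb r l0 = g_lam hb r (path t)"
proof (rule subspace_dim_equal)
  let ?\<Phi> = "\<lambda>x0. bracket.flow x0 t"
  show "subspace (?\<Phi> ` g_lam hb r l0)"
    by (rule linear_subspace_image[OF bracket.linear_flow[OF t] subspace_g_lam])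
  show "subspace (g_lam hb r (path t))" by (rule subspace_g_lam)
  show "?\<Phi> ` g_lam hb r l0 \<subseteq> g_lam hb r (path t)"
    using flow_in_g_lam[OF _ t] by auto
  show "dim (g_lam hb r (path t)) \<le> dim (?\<Phi> ` g_lam hb r l0)"
    using le bracket.dim_flow_image[OF t] by simp
qed

lemma velocity_of_transport:
  assumes t: "t \<in> {0..1}" and le: "dim (g_lam hb r (path t)) \<le> dim (g_lam hb r l0)"
    and c: "c \<in> g_lam hb r l0"
  obtains d where "d \<in> g_lam hb r l0" "bracket_field t (bracket.flow c t) = bracket.flow d t"
    and "norm d \<le> bracket.bound * exp (2 * bracket.bound) * norm c"
proof -
  let ?K = "bracket.bound"
  have "bracket.flow c t \<in> g_lam hb r (path t)" by (rule flow_in_g_lam[OF c t])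
  then have "bracket_field t (bracket.flow c t) \<in> g_lam hb r (path t)"
    using lie_subalgebra_g_lam rsharp_in_g_lam unfolding lie_subalgebra_def bracket_field_def by blast
  then obtain d where d: "d \<in> g_lam hb r l0" "bracket_field t (bracket.flow c t) = bracket.flow d t"
    unfolding flow_image_g_lam[OF t le, symmetric] by blast
  have "norm d \<le> exp ?K * norm (bracket_field t (bracket.flow c t))"
    using bracket.norm_le_flow[OF t, of d] d(2) by simp
  also have "\<dots> \<le> exp ?K * (?K * (exp ?K * norm c))"
    using bracket.norm_F_le[OF t, of "bracket.flow c t"] bracket.norm_flow_le[OF t, of c]
      bracket.bound_pos by (intro mult_left_mono) (auto intro: order_trans)
  also have "\<dots> = ?K * exp (2 * ?K) * norm c" by (simp add: exp_double power2_eq_square)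
  finally show ?thesis using d that by blast
qed

lemma g_lam_endpoint_eq:
  assumes le: "\<And>t. t \<in> {0..1} \<Longrightarrow> dim (g_lam hb r (path t)) \<le> dim (g_lam hb r l0)"
  shows "g_lam hb r (l0 + v) = g_lam hb r l0"
proof -
  let ?g0 = "g_lam hb r l0" and ?C = "bracket.bound * exp (2 * bracket.bound)"
  obtain B where B: "B \<subseteq> ?g0" "pairwise orthogonal B" "\<And>b. b \<in> B \<Longrightarrow> norm b = 1"
      "independent B" "span B = ?g0"
    using orthonormal_basis_subspace[OF subspace_g_lam] by metis
  have fin: "finite B" using B(4) by (rule finiteI_independent)
  have frame: "\<exists>a. bracket_field t (bracket.flow c t) = (\<Sum>b\<in>B. a b *\<^sub>R bracket.flow b t)
      \<and> (\<forall>b\<in>B. \<bar>a b\<bar> \<le> ?C)"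
    if c: "c \<in> B" and t: "0 < t" "t < 1" for c t
  proof -
    have t01: "t \<in> {0..1}" using t by auto
    obtain d where d: "d \<in> ?g0" "bracket_field t (bracket.flow c t) = bracket.flow d t"
      and norm_d: "norm d \<le> ?C * norm c"
      using velocity_of_transport[OF t01 le[OF t01]] B(1) c by blast
    have "(\<Sum>b\<in>B. (d \<bullet> b) *\<^sub>R bracket.flow b t) = bracket.flow (\<Sum>b\<in>B. (d \<bullet> b) *\<^sub>R b) t"
      by (simp add: linear_sum[OF bracket.linear_flow[OF t01]] linear_scale[OF bracket.linear_flow[OF t01]])
    also have "(\<Sum>b\<in>B. (d \<bullet> b) *\<^sub>R b) = d"
      using orthonormal_basis_expand[OF B(2,3) _ fin, of d] d(1) B(5) by simp
    finally have "bracket.flow d t = (\<Sum>b\<in>B. (d \<bullet> b) *\<^sub>R bracket.flow b t)" ..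
    moreover have "\<bar>d \<bullet> b\<bar> \<le> ?C" if "b \<in> B" for b
      using Cauchy_Schwarz_ineq2[of d b] B(3) norm_d c that by auto
    ultimately show ?thesis using d(2) by (intro exI[of _ "\<lambda>b. d \<bullet> b"]) auto
  qed
  have "bracket.flow c 1 \<in> ?g0" if c: "c \<in> B" for c
  proof (rule curves_stay_in_subspace[where X = bracket.flow
        and D = "\<lambda>b t. bracket_field t (bracket.flow b t)", OF fin subspace_g_lam])
    show "bracket.flow b 0 \<in> ?g0" if "b \<in> B" for b
      using B(1) that by (auto simp: bracket.flow_0)
  qed (use c frame bracket.continuous_on_flow bracket.has_vector_derivative_flow in auto)
  then have "span ((\<lambda>x0. bracket.flow x0 1) ` B) \<subseteq> ?g0"
    by (intro span_minimal subspace_g_lam) auto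
  then have "(\<lambda>x0. bracket.flow x0 1) ` span B \<subseteq> ?g0"
    by (simp add: linear_span_image[OF bracket.linear_flow[of 1]])
  then have "g_lam hb r (path 1) \<subseteq> ?g0"
    using flow_image_g_lam[of 1] le[of 1] B(5) by simp
  moreover have "dim ?g0 \<le> dim (g_lam hb r (path 1))" by (rule dim_g_lam_le) simp
  ultimately have "g_lam hb r (path 1) = ?g0"
    by (intro subspace_dim_equal subspace_g_lam)
  then show ?thesis by simp
qed

end

section \<open>Constancy of \<open>g\<^sub>\<lambda>\<close>\<close>

context splittable_tdrm
begin

text \<open>The base point \<open>l0\<close> does not occur in the assumptions of \<open>tdrm_path\<close>, so the locale
  predicate has no argument for it.\<close>

lemma ex_tdrm_path: "\<exists>\<xi>v. tdrm_path br hb r v \<xi>v"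
proof -
  obtain \<xi>v where "restr_h hb \<xi>v = v" using exists_split_covector[of 0 v] by blast
  then have "tdrm_path br hb r v \<xi>v"
    by (intro tdrm_path.intro splittable_tdrm_axioms) (simp add: tdrm_path_axioms_def)
  then show ?thesis ..
qed

lemma dim_g_lam_eq: "dim (g_lam hb r lam) = dim (g_lam hb r mu)"
proof -
  have "dim (g_lam hb r lam) \<le> dim (g_lam hb r mu)" for lam mu
  proof -
    obtain \<xi>v where "tdrm_path br hb r (mu - lam) \<xi>v" using ex_tdrm_path by blast
    then interpret tdrm_path br hb r lam "mu - lam" \<xi>v .
    show ?thesis using dim_g_lam_le[of 1] by simp
  qed
  from this[of lam mu] this[of mu lam] show ?thesis by (rule order_antisym)
qed

lemma g_lam_const: "g_lam hb r lam = g_lam hb r mu"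
proof -
  obtain \<xi>v where "tdrm_path br hb r (mu - lam) \<xi>v" using ex_tdrm_path by blast
  then interpret tdrm_path br hb r lam "mu - lam" \<xi>v .
  have "g_lam hb r (lam + (mu - lam)) = g_lam hb r lam"
  proof (rule g_lam_endpoint_eq)
    show "dim (g_lam hb r (path t)) \<le> dim (g_lam hb r lam)" for t
      using dim_g_lam_eq[of "path t" lam] by simp
  qed
  then show ?thesis by simp
qed

end

theorem corollary2p9:
  fixes br :: "real^'n \<Rightarrow> real^'n \<Rightarrow> real^'n"
    and hb :: "'l::finite \<Rightarrow> real^'n"
    and r :: "real^'l \<Rightarrow> real^'n^'n"
  assumes "lie_algebra br"
    and "inj hb" and "independent (range hb)"
    and "\<forall>i j. br (hb i) (hb j) = 0"
    and "tdrm br UNIV hb r"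
    and "splittable hb r"
  shows "(\<forall>lam mu. g_lam hb r lam = g_lam hb r mu) \<and>
         (\<forall>g1. g1 = g_lam hb r 0 \<longrightarrow>
             (\<forall>lam. r lam \<in> wedge2 g1) \<and> tdrm br g1 hb r \<and> nondegenerate g1 hb r)"
proof -
  interpret splittable_tdrm br hb r
    by (rule splittable_tdrm.intro) (use assms in simp_all)
  show ?thesis
  proof (intro conjI allI impI)
    show "g_lam hb r lam = g_lam hb r mu" for lam mu by (rule g_lam_const)
    fix g1 assume g1: "g1 = g_lam hb r 0"
    show wedge: "r lam \<in> wedge2 g1" for lam
      using r_in_wedge2_g_lam[of lam] g_lam_const[of lam 0] g1 by simp
    have "lie_subalgebra br g1" using lie_subalgebra_g_lam[of 0] g1 by simp
    moreover have "range hb \<subseteq> g1" using hspace_subset_g_lam[of hb r 0] hb_in_hspace[of hb] g1 by auto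
    ultimately show "tdrm br g1 hb r"
      using tdrm wedge by (simp add: tdrm_def)
    show "nondegenerate g1 hb r"
      unfolding nondegenerate_def g1 by (intro allI g_lam_const)
  qed
qed

end
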